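(* Let $\Sigma$ be a finite polyhedral fan, $\mathcal A=\mathcal A_\Sigma$, and let $\mathcal I$ be a flabby $\mathcal A$-module. If $\eta:\mathcal M\to\mathcal N$ is a strongly injective map of $\mathcal A$-modules and $\mathcal N$ is locally free, then the induced map $\operatorname{Hom}_{\mathcal A}(\mathcal N,\mathcal I)\to\operatorname{Hom}_{\mathcal A}(\mathcal M,\mathcal I)$ is surjective.
   Context: $\mathcal A_\tau$ ($\tau\in\Sigma$) is the graded ring of complex polynomial functions on $\operatorname{Span}\tau$ with linear functions in degree $2$, and restriction maps to faces. An $\mathcal A$-module consists of finitely generated graded $\mathcal A_\tau$-modules $\mathcal M(\tau)$ with degree-$0$ $\mathcal A_\tau$-linear restriction maps $\mathcal M(\tau)\to\mathcal M(\xi)$ for $\xi$ a face of $\tau$, compatible with composition; $\operatorname{Hom}_{\mathcal A}$ denotes degree-$0$ morphisms. $\mathcal M(\partial\sigma)$ is the space of compatible families $(m_\xi)$ over the proper faces $\xi$ of $\sigma$. $\mathcal M$ is locally free if each $\mathcal M(\sigma)$ is free over $\mathcal A_\sigma$, and flabby if each $\mathcal M(\sigma)\to\mathcal M(\partial\sigma)$ is surjective. An injective map $\mathcal M\to\mathcal N$ is strongly injective if for every $\sigma$ the inclusion $\mathcal M(\sigma)\to\mathcal N(\sigma)$ splits (as graded $\mathcal A_\sigma$-modules). *)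

theory Defs
  imports "HOL-Analysis.Polytope" "HOL-Algebra.Module"
begin

definition cface :: "'a::euclidean_space set \<Rightarrow> 'a set \<Rightarrow> bool" where
  "cface \<xi> \<tau> \<longleftrightarrow> \<xi> face_of \<tau> \<and> \<xi> \<noteq> {}"

definition polyhedral_cone :: "'a::euclidean_space set \<Rightarrow> bool" where
  "polyhedral_cone \<sigma> \<longleftrightarrow> polyhedron \<sigma> \<and> cone \<sigma> \<and> \<sigma> \<noteq> {} \<and>
     (\<forall>x. x \<in> \<sigma> \<and> - x \<in> \<sigma> \<longrightarrow> x = 0)"

definition finite_fan :: "'a::euclidean_space set set \<Rightarrow> bool" where
  "finite_fan \<Sigma> \<longleftrightarrow> finite \<Sigma> \<and> (\<forall>\<sigma>\<in>\<Sigma>. polyhedral_cone \<sigma>) \<and>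
     (\<forall>\<sigma>\<in>\<Sigma>. \<forall>\<xi>. cface \<xi> \<sigma> \<longrightarrow> \<xi> \<in> \<Sigma>) \<and>
     (\<forall>\<sigma>\<in>\<Sigma>. \<forall>\<tau>\<in>\<Sigma>. cface (\<sigma> \<inter> \<tau>) \<sigma> \<and> cface (\<sigma> \<inter> \<tau>) \<tau>)"

inductive_set polyfun :: "('a::euclidean_space \<Rightarrow> complex) set" where
  const: "(\<lambda>x. c) \<in> polyfun"
| lin: "(\<lambda>x. complex_of_real (v \<bullet> x)) \<in> polyfun"
| add: "f \<in> polyfun \<Longrightarrow> g \<in> polyfun \<Longrightarrow> (\<lambda>x. f x + g x) \<in> polyfun"
| mult: "f \<in> polyfun \<Longrightarrow> g \<in> polyfun \<Longrightarrow> (\<lambda>x. f x * g x) \<in> polyfun"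

text \<open>A function on \<open>Span \<tau>\<close>, represented as a function on the whole space that is
  zero outside \<open>Span \<tau>\<close>.\<close>
definition rs :: "'a::euclidean_space set \<Rightarrow> ('a \<Rightarrow> complex) \<Rightarrow> 'a \<Rightarrow> complex" where
  "rs \<tau> f = (\<lambda>x. if x \<in> span \<tau> then f x else 0)"

definition A :: "'a::euclidean_space set \<Rightarrow> ('a \<Rightarrow> complex) ring" where
  "A \<tau> = \<lparr> carrier = rs \<tau> ` polyfun,
           mult = (\<lambda>f g x. f x * g x),
           one = rs \<tau> (\<lambda>x. 1),
           zero = (\<lambda>x. 0),
           add = (\<lambda>f g x. f x + g x) \<rparr>"

text \<open>Homogeneous part of degree \<open>d\<close> of \<open>A_\<tau>\<close>; linear functions have degree 2.\<close>
definition Ahom :: "'a::euclidean_space set \<Rightarrow> int \<Rightarrow> ('a \<Rightarrow> complex) set" where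
  "Ahom \<tau> d = {f \<in> carrier (A \<tau>). f = (\<lambda>x. 0) \<or>
      (\<exists>k::nat. d = 2 * int k \<and>
         (\<forall>t::real. \<forall>x\<in>span \<tau>. f (t *\<^sub>R x) = complex_of_real t ^ k * f x))}"

definition graded_module ::
  "('r, 'x) ring_scheme \<Rightarrow> (int \<Rightarrow> 'r set) \<Rightarrow> ('r, 'm) module \<Rightarrow> (int \<Rightarrow> 'm set) \<Rightarrow> bool" where
  "graded_module R Rh M Mh \<longleftrightarrow> Module.module R M \<and>
     (\<forall>d. subgroup (Mh d) (add_monoid M)) \<and>
     (\<forall>d e a m. a \<in> Rh d \<longrightarrow> m \<in> Mh e \<longrightarrow> a \<odot>\<^bsub>M\<^esub> m \<in> Mh (d + e)) \<and>
     (\<forall>x\<in>carrier M. \<exists>!c. (\<forall>d. c d \<in> Mh d) \<and> finite {d. c d \<noteq> \<zero>\<^bsub>M\<^esub>} \<and>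
         x = (\<Oplus>\<^bsub>M\<^esub>d\<in>{d. c d \<noteq> \<zero>\<^bsub>M\<^esub>}. c d))"

definition fin_gen :: "('r, 'x) ring_scheme \<Rightarrow> ('r, 'm) module \<Rightarrow> bool" where
  "fin_gen R M \<longleftrightarrow> (\<exists>G. finite G \<and> G \<subseteq> carrier M \<and>
     (\<forall>x\<in>carrier M. \<exists>a \<in> G \<rightarrow> carrier R. x = (\<Oplus>\<^bsub>M\<^esub>g\<in>G. a g \<odot>\<^bsub>M\<^esub> g)))"

text \<open>Free module (a finitely generated free module has a finite basis).\<close>
definition free_module :: "('r, 'x) ring_scheme \<Rightarrow> ('r, 'm) module \<Rightarrow> bool" where
  "free_module R M \<longleftrightarrow> (\<exists>B. finite B \<and> B \<subseteq> carrier M \<and>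
     (\<forall>x\<in>carrier M. \<exists>!a. a \<in> B \<rightarrow>\<^sub>E carrier R \<and> x = (\<Oplus>\<^bsub>M\<^esub>b\<in>B. a b \<odot>\<^bsub>M\<^esub> b)))"

definition graded_hom ::
  "('r, 'x) ring_scheme \<Rightarrow> ('r, 'm) module \<Rightarrow> (int \<Rightarrow> 'm set) \<Rightarrow>
   ('r, 'n) module \<Rightarrow> (int \<Rightarrow> 'n set) \<Rightarrow> ('m \<Rightarrow> 'n) \<Rightarrow> bool" where
  "graded_hom R M Mh N Nh f \<longleftrightarrow> f \<in> carrier M \<rightarrow> carrier N \<and>
     (\<forall>x\<in>carrier M. \<forall>y\<in>carrier M. f (x \<oplus>\<^bsub>M\<^esub> y) = f x \<oplus>\<^bsub>N\<^esub> f y) \<and>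
     (\<forall>a\<in>carrier R. \<forall>x\<in>carrier M. f (a \<odot>\<^bsub>M\<^esub> x) = a \<odot>\<^bsub>N\<^esub> f x) \<and>
     (\<forall>d. f ` Mh d \<subseteq> Nh d)"

record ('a, 'm) amod =
  Mod :: "'a set \<Rightarrow> ('a \<Rightarrow> complex, 'm) module"
  Deg :: "'a set \<Rightarrow> int \<Rightarrow> 'm set"
  Res :: "'a set \<Rightarrow> 'a set \<Rightarrow> 'm \<Rightarrow> 'm"

definition A_module :: "'a::euclidean_space set set \<Rightarrow> ('a, 'm) amod \<Rightarrow> bool" where
  "A_module \<Sigma> \<M> \<longleftrightarrow>
     (\<forall>\<tau>\<in>\<Sigma>. graded_module (A \<tau>) (Ahom \<tau>) (Mod \<M> \<tau>) (Deg \<M> \<tau>) \<and>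
              fin_gen (A \<tau>) (Mod \<M> \<tau>)) \<and>
     (\<forall>\<tau>\<in>\<Sigma>. \<forall>\<xi>. cface \<xi> \<tau> \<longrightarrow>
        Res \<M> \<tau> \<xi> \<in> carrier (Mod \<M> \<tau>) \<rightarrow> carrier (Mod \<M> \<xi>) \<and>
        (\<forall>x\<in>carrier (Mod \<M> \<tau>). \<forall>y\<in>carrier (Mod \<M> \<tau>).
           Res \<M> \<tau> \<xi> (x \<oplus>\<^bsub>Mod \<M> \<tau>\<^esub> y) = Res \<M> \<tau> \<xi> x \<oplus>\<^bsub>Mod \<M> \<xi>\<^esub> Res \<M> \<tau> \<xi> y) \<and>
        (\<forall>a\<in>carrier (A \<tau>). \<forall>x\<in>carrier (Mod \<M> \<tau>).
           Res \<M> \<tau> \<xi> (a \<odot>\<^bsub>Mod \<M> \<tau>\<^esub> x) = rs \<xi> a \<odot>\<^bsub>Mod \<M> \<xi>\<^esub> Res \<M> \<tau> \<xi> x) \<and>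
        (\<forall>d. Res \<M> \<tau> \<xi> ` Deg \<M> \<tau> d \<subseteq> Deg \<M> \<xi> d)) \<and>
     (\<forall>\<tau>\<in>\<Sigma>. \<forall>x\<in>carrier (Mod \<M> \<tau>). Res \<M> \<tau> \<tau> x = x) \<and>
     (\<forall>\<tau>\<in>\<Sigma>. \<forall>\<xi> \<zeta>. cface \<xi> \<tau> \<longrightarrow> cface \<zeta> \<xi> \<longrightarrow>
        (\<forall>x\<in>carrier (Mod \<M> \<tau>). Res \<M> \<xi> \<zeta> (Res \<M> \<tau> \<xi> x) = Res \<M> \<tau> \<zeta> x))"

definition A_hom :: "'a::euclidean_space set set \<Rightarrow> ('a, 'm) amod \<Rightarrow> ('a, 'n) amod \<Rightarrow>
                     ('a set \<Rightarrow> 'm \<Rightarrow> 'n) \<Rightarrow> bool" where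
  "A_hom \<Sigma> \<M> \<N> f \<longleftrightarrow>
     (\<forall>\<tau>\<in>\<Sigma>. graded_hom (A \<tau>) (Mod \<M> \<tau>) (Deg \<M> \<tau>) (Mod \<N> \<tau>) (Deg \<N> \<tau>) (f \<tau>)) \<and>
     (\<forall>\<tau>\<in>\<Sigma>. \<forall>\<xi>. cface \<xi> \<tau> \<longrightarrow>
        (\<forall>x\<in>carrier (Mod \<M> \<tau>). f \<xi> (Res \<M> \<tau> \<xi> x) = Res \<N> \<tau> \<xi> (f \<tau> x)))"

definition locally_free :: "'a::euclidean_space set set \<Rightarrow> ('a, 'm) amod \<Rightarrow> bool" where
  "locally_free \<Sigma> \<M> \<longleftrightarrow> (\<forall>\<sigma>\<in>\<Sigma>. free_module (A \<sigma>) (Mod \<M> \<sigma>))"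

definition boundary_sections :: "('a::euclidean_space, 'm) amod \<Rightarrow> 'a set \<Rightarrow> ('a set \<Rightarrow> 'm) set" where
  "boundary_sections \<M> \<sigma> = {m. (\<forall>\<xi>. cface \<xi> \<sigma> \<and> \<xi> \<noteq> \<sigma> \<longrightarrow> m \<xi> \<in> carrier (Mod \<M> \<xi>)) \<and>
      (\<forall>\<xi> \<zeta>. cface \<xi> \<sigma> \<and> \<xi> \<noteq> \<sigma> \<longrightarrow> cface \<zeta> \<xi> \<longrightarrow> Res \<M> \<xi> \<zeta> (m \<xi>) = m \<zeta>)}"

definition flabby :: "'a::euclidean_space set set \<Rightarrow> ('a, 'm) amod \<Rightarrow> bool" where
  "flabby \<Sigma> \<M> \<longleftrightarrow> (\<forall>\<sigma>\<in>\<Sigma>. \<forall>m\<in>boundary_sections \<M> \<sigma>.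
      \<exists>x\<in>carrier (Mod \<M> \<sigma>). \<forall>\<xi>. cface \<xi> \<sigma> \<and> \<xi> \<noteq> \<sigma> \<longrightarrow> Res \<M> \<sigma> \<xi> x = m \<xi>)"

definition strongly_injective :: "'a::euclidean_space set set \<Rightarrow> ('a, 'm) amod \<Rightarrow> ('a, 'n) amod \<Rightarrow>
                     ('a set \<Rightarrow> 'm \<Rightarrow> 'n) \<Rightarrow> bool" where
  "strongly_injective \<Sigma> \<M> \<N> \<eta> \<longleftrightarrow> A_hom \<Sigma> \<M> \<N> \<eta> \<and>
     (\<forall>\<sigma>\<in>\<Sigma>. inj_on (\<eta> \<sigma>) (carrier (Mod \<M> \<sigma>))) \<and>
     (\<forall>\<sigma>\<in>\<Sigma>. \<exists>r. graded_hom (A \<sigma>) (Mod \<N> \<sigma>) (Deg \<N> \<sigma>) (Mod \<M> \<sigma>) (Deg \<M> \<sigma>) r \<and>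
                  (\<forall>x\<in>carrier (Mod \<M> \<sigma>). r (\<eta> \<sigma> x) = x))"

end

theory Submission
  imports Defs "HOL-Algebra.AbelCoset"
begin

text \<open>The extension \<open>\<psi>\<close> of \<open>\<phi>\<close> is built cone by cone, by induction over face-closed subfans,
  always adding a maximal cone \<open>\<sigma>\<close>. On the proper faces of \<open>\<sigma>\<close>, \<open>\<psi>\<close> is already defined and the
  restrictions of \<open>n \<in> \<N>(\<sigma>)\<close> give a compatible family \<open>\<psi>(n|\<^sub>\<xi>)\<close> in \<open>\<I>(\<partial>\<sigma>)\<close>, which lifts to
  \<open>\<I>(\<sigma>)\<close> because \<open>\<I>\<close> is flabby. Choosing such lifts on a basis of the free module \<open>\<N>(\<sigma>)\<close>
  gives an \<open>A\<^sub>\<sigma>\<close>-linear map \<open>c : \<N>(\<sigma>) \<rightarrow> \<I>(\<sigma>)\<close> compatible with \<open>\<psi>\<close>; its degree-0 part is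
  graded and still compatible, because restrictions preserve degrees. Finally, if \<open>r\<close> is a
  graded retraction of \<open>\<eta>\<^sub>\<sigma>\<close>, the map \<open>\<phi>\<^sub>\<sigma> r + c (1 - \<eta>\<^sub>\<sigma> r)\<close> extends \<open>\<phi>\<^sub>\<sigma>\<close> and is still
  compatible with \<open>\<psi>\<close>, since on the faces \<open>\<psi> \<eta> = \<phi>\<close>.\<close>

(* The quotient-group syntax of HOL-Algebra would capture the field Mod of A-modules. *)
no_notation FactGroup (infixl \<open>Mod\<close> 65)

lemma abelian_group_homI':
  assumes "abelian_group G" "abelian_group H" "h \<in> carrier G \<rightarrow> carrier H"
    and "\<And>x y. x \<in> carrier G \<Longrightarrow> y \<in> carrier G \<Longrightarrow> h (x \<oplus>\<^bsub>G\<^esub> y) = h x \<oplus>\<^bsub>H\<^esub> h y"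
  shows "abelian_group_hom G H h"
  using assms
  by (intro abelian_group_homI group_hom.intro group_hom_axioms.intro homI abelian_group.a_group)
     auto

lemma (in abelian_group_hom) hom_finsum:
  assumes "finite S" "g \<in> S \<rightarrow> carrier G"
  shows "h (finsum G g S) = finsum H (\<lambda>i. h (g i)) S"
  using assms by (induction S rule: finite_induct) (auto simp: Pi_def)

lemma (in abelian_group_hom) hom_a_minus:
  "x \<in> carrier G \<Longrightarrow> y \<in> carrier G \<Longrightarrow> h (x \<ominus>\<^bsub>G\<^esub> y) = h x \<ominus>\<^bsub>H\<^esub> h y"
  by (simp add: a_minus_def)

lemma abelian_group_hom_comp:
  assumes "abelian_group_hom G H f" "abelian_group_hom H K g"
  shows "abelian_group_hom G K (\<lambda>x. g (f x))"
proof -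
  interpret f: abelian_group_hom G H f by fact
  interpret g: abelian_group_hom H K g by fact
  show ?thesis
    using abelian_group_hom.axioms(1)[OF assms(1)] abelian_group_hom.axioms(2)[OF assms(2)]
    by (intro abelian_group_homI') auto
qed

section \<open>Graded modules\<close>

lemma graded_module_module: "graded_module R Rh M Mh \<Longrightarrow> module R M"
  by (simp add: graded_module_def)

lemma graded_module_abelian_group: "graded_module R Rh M Mh \<Longrightarrow> abelian_group M"
  by (simp add: graded_module_def module_def)

lemma homogeneous_subgroup: "graded_module R Rh M Mh \<Longrightarrow> subgroup (Mh d) (add_monoid M)"
  by (simp add: graded_module_def)

lemma homogeneous_in_carrier: "graded_module R Rh M Mh \<Longrightarrow> x \<in> Mh d \<Longrightarrow> x \<in> carrier M"
  using subgroup.subset[OF homogeneous_subgroup] by fastforce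

lemma zero_homogeneous: "graded_module R Rh M Mh \<Longrightarrow> \<zero>\<^bsub>M\<^esub> \<in> Mh d"
  using subgroup.one_closed[OF homogeneous_subgroup] by fastforce

lemma add_homogeneous:
  "graded_module R Rh M Mh \<Longrightarrow> x \<in> Mh d \<Longrightarrow> y \<in> Mh d \<Longrightarrow> x \<oplus>\<^bsub>M\<^esub> y \<in> Mh d"
  using subgroup.m_closed[OF homogeneous_subgroup] by fastforce

lemma minus_homogeneous:
  "graded_module R Rh M Mh \<Longrightarrow> x \<in> Mh d \<Longrightarrow> y \<in> Mh d \<Longrightarrow> x \<ominus>\<^bsub>M\<^esub> y \<in> Mh d"
  unfolding a_minus_def a_inv_def
  using subgroup.m_closed[OF homogeneous_subgroup] subgroup.m_inv_closed[OF homogeneous_subgroup]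
  by fastforce

lemma smult_homogeneous:
  "graded_module R Rh M Mh \<Longrightarrow> a \<in> Rh e \<Longrightarrow> x \<in> Mh d \<Longrightarrow> a \<odot>\<^bsub>M\<^esub> x \<in> Mh (e + d)"
  by (simp add: graded_module_def)

definition degree_part :: "('r, 'm) module \<Rightarrow> (int \<Rightarrow> 'm set) \<Rightarrow> 'm \<Rightarrow> int \<Rightarrow> 'm" where
  "degree_part M Mh x = (THE c. (\<forall>d. c d \<in> Mh d) \<and> finite {d. c d \<noteq> \<zero>\<^bsub>M\<^esub>} \<and>
     x = (\<Oplus>\<^bsub>M\<^esub>d\<in>{d. c d \<noteq> \<zero>\<^bsub>M\<^esub>}. c d))"

definition degree_support :: "('r, 'm) module \<Rightarrow> (int \<Rightarrow> 'm set) \<Rightarrow> 'm \<Rightarrow> int set" where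
  "degree_support M Mh x = {d. degree_part M Mh x d \<noteq> \<zero>\<^bsub>M\<^esub>}"

context
  fixes R :: "('r, 'x) ring_scheme" and Rh and M :: "('r, 'm) module" and Mh
  assumes graded: "graded_module R Rh M Mh"
begin

interpretation M: module R M
  using graded by (rule graded_module_module)

lemma degree_part_decomposition:
  assumes "x \<in> carrier M"
  shows "(\<forall>d. degree_part M Mh x d \<in> Mh d) \<and> finite (degree_support M Mh x) \<and>
    x = finsum M (degree_part M Mh x) (degree_support M Mh x)"
proof -
  have "\<exists>!c. (\<forall>d. c d \<in> Mh d) \<and> finite {d. c d \<noteq> \<zero>\<^bsub>M\<^esub>} \<and>
      x = (\<Oplus>\<^bsub>M\<^esub>d\<in>{d. c d \<noteq> \<zero>\<^bsub>M\<^esub>}. c d)"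
    using graded assms by (simp add: graded_module_def)
  from theI'[OF this] show ?thesis
    unfolding degree_part_def[symmetric] degree_support_def .
qed

lemma degree_part_homogeneous: "x \<in> carrier M \<Longrightarrow> degree_part M Mh x d \<in> Mh d"
  using degree_part_decomposition by blast

lemma degree_part_carrier: "x \<in> carrier M \<Longrightarrow> degree_part M Mh x d \<in> carrier M"
  using homogeneous_in_carrier[OF graded degree_part_homogeneous] .

lemma finite_degree_support: "x \<in> carrier M \<Longrightarrow> finite (degree_support M Mh x)"
  using degree_part_decomposition by blast

lemma finsum_degree_parts:
  assumes x: "x \<in> carrier M" and "finite S" "degree_support M Mh x \<subseteq> S"
  shows "finsum M (degree_part M Mh x) S = x"
proof -
  have "finsum M (degree_part M Mh x) S = finsum M (degree_part M Mh x) (degree_support M Mh x)"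
    using assms degree_part_carrier[OF x]
    by (intro M.add.finprod_mono_neutral_cong_right) (auto simp: degree_support_def)
  also have "\<dots> = x"
    using degree_part_decomposition[OF x] by simp
  finally show ?thesis .
qed

lemma degree_part_unique:
  assumes c: "\<And>d. c d \<in> Mh d" and S: "finite S" and outside: "\<And>d. d \<notin> S \<Longrightarrow> c d = \<zero>\<^bsub>M\<^esub>"
  shows "degree_part M Mh (finsum M c S) = c"
proof -
  let ?x = "finsum M c S"
  have c_carrier: "c d \<in> carrier M" for d
    using homogeneous_in_carrier[OF graded c] .
  have support: "{d. c d \<noteq> \<zero>\<^bsub>M\<^esub>} \<subseteq> S"
    using outside by blast
  have "?x = (\<Oplus>\<^bsub>M\<^esub>d\<in>{d. c d \<noteq> \<zero>\<^bsub>M\<^esub>}. c d)"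
    using S support c_carrier by (intro M.add.finprod_mono_neutral_cong_right) auto
  moreover have "finite {d. c d \<noteq> \<zero>\<^bsub>M\<^esub>}"
    using S support finite_subset by blast
  moreover have "\<exists>!c. (\<forall>d. c d \<in> Mh d) \<and> finite {d. c d \<noteq> \<zero>\<^bsub>M\<^esub>} \<and>
      ?x = (\<Oplus>\<^bsub>M\<^esub>d\<in>{d. c d \<noteq> \<zero>\<^bsub>M\<^esub>}. c d)"
    using graded c_carrier by (simp add: graded_module_def Pi_def)
  ultimately show ?thesis
    unfolding degree_part_def using c by (intro the1_equality) auto
qed

lemma degree_part_of_homogeneous:
  assumes "x \<in> Mh e"
  shows "degree_part M Mh x d = (if d = e then x else \<zero>\<^bsub>M\<^esub>)"
proof -
  have "x = finsum M (\<lambda>d. if d = e then x else \<zero>\<^bsub>M\<^esub>) {e}"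
    using homogeneous_in_carrier[OF graded assms] by simp
  also have "degree_part M Mh \<dots> = (\<lambda>d. if d = e then x else \<zero>\<^bsub>M\<^esub>)"
    using assms zero_homogeneous[OF graded] by (intro degree_part_unique) auto
  finally show ?thesis by simp
qed

lemma degree_part_zero: "degree_part M Mh \<zero>\<^bsub>M\<^esub> d = \<zero>\<^bsub>M\<^esub>"
  using degree_part_of_homogeneous[OF zero_homogeneous[OF graded, of 0]] by simp

lemma degree_part_add:
  assumes x: "x \<in> carrier M" and y: "y \<in> carrier M"
  shows "degree_part M Mh (x \<oplus>\<^bsub>M\<^esub> y) d = degree_part M Mh x d \<oplus>\<^bsub>M\<^esub> degree_part M Mh y d"
proof -
  let ?S = "degree_support M Mh x \<union> degree_support M Mh y"
  have S: "finite ?S"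
    using finite_degree_support x y by blast
  have "x \<oplus>\<^bsub>M\<^esub> y = finsum M (degree_part M Mh x) ?S \<oplus>\<^bsub>M\<^esub> finsum M (degree_part M Mh y) ?S"
    using finsum_degree_parts[OF x S] finsum_degree_parts[OF y S] by auto
  also have "\<dots> = finsum M (\<lambda>d. degree_part M Mh x d \<oplus>\<^bsub>M\<^esub> degree_part M Mh y d) ?S"
    using degree_part_carrier x y by (simp add: M.finsum_addf Pi_def)
  also have "degree_part M Mh \<dots> = (\<lambda>d. degree_part M Mh x d \<oplus>\<^bsub>M\<^esub> degree_part M Mh y d)"
    using S add_homogeneous[OF graded] degree_part_homogeneous x y
    by (intro degree_part_unique) (auto simp: degree_support_def)
  finally show ?thesis by simp
qed

lemma degree_part_smult:
  assumes Rh: "Rh e \<subseteq> carrier R" and a: "a \<in> Rh e" and x: "x \<in> carrier M"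
  shows "degree_part M Mh (a \<odot>\<^bsub>M\<^esub> x) d = a \<odot>\<^bsub>M\<^esub> degree_part M Mh x (d - e)"
proof -
  let ?S = "degree_support M Mh x"
  let ?shift = "\<lambda>d. d + e"
  have S: "finite ?S" using finite_degree_support[OF x] .
  have a_carrier: "a \<in> carrier R" using a Rh by blast
  have "a \<odot>\<^bsub>M\<^esub> x = finsum M (\<lambda>d. a \<odot>\<^bsub>M\<^esub> degree_part M Mh x d) ?S"
    using finsum_degree_parts[OF x S] S a_carrier degree_part_carrier[OF x]
    by (metis M.finsum_smult_ldistr Pi_I order_refl)
  also have "\<dots> = finsum M (\<lambda>d. a \<odot>\<^bsub>M\<^esub> degree_part M Mh x (d - e)) (?shift ` ?S)"
    using a_carrier degree_part_carrier[OF x]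
    by (subst M.finsum_reindex) (auto simp: inj_on_def)
  also have "degree_part M Mh \<dots> = (\<lambda>d. a \<odot>\<^bsub>M\<^esub> degree_part M Mh x (d - e))"
  proof (rule degree_part_unique)
    show "a \<odot>\<^bsub>M\<^esub> degree_part M Mh x (d - e) \<in> Mh d" for d
      using smult_homogeneous[OF graded a degree_part_homogeneous[OF x, of "d - e"]] by simp
    show "a \<odot>\<^bsub>M\<^esub> degree_part M Mh x (d - e) = \<zero>\<^bsub>M\<^esub>" if "d \<notin> ?shift ` ?S" for d
    proof -
      have "d - e \<notin> ?S" using that by force
      then show ?thesis using a_carrier by (simp add: degree_support_def)
    qed
  qed (use S in simp)
  finally show ?thesis by simp
qed

end

lemma degree_part_map:
  assumes M: "graded_module R Rh M Mh" and N: "graded_module R' Rh' N Nh"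
    and f: "abelian_group_hom M N f" and deg: "\<And>d. f ` Mh d \<subseteq> Nh d" and x: "x \<in> carrier M"
  shows "degree_part N Nh (f x) d = f (degree_part M Mh x d)"
proof -
  interpret f: abelian_group_hom M N f by (fact f)
  let ?S = "degree_support M Mh x"
  have S: "finite ?S" using finite_degree_support[OF M x] .
  have "f x = finsum N (\<lambda>d. f (degree_part M Mh x d)) ?S"
    using finsum_degree_parts[OF M x S] degree_part_carrier[OF M x]
    by (metis f.hom_finsum[OF S] Pi_I order_refl)
  also have "degree_part N Nh \<dots> = (\<lambda>d. f (degree_part M Mh x d))"
    using degree_part_homogeneous[OF M x] deg S
    by (intro degree_part_unique[OF N]) (auto simp: degree_support_def)
  finally show ?thesis by simp
qed

section \<open>Degree-zero parts of linear maps\<close>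

inductive_set homogeneous_sums :: "('r, 'x) ring_scheme \<Rightarrow> (int \<Rightarrow> 'r set) \<Rightarrow> 'r set"
  for R :: "('r, 'x) ring_scheme" and Rh :: "int \<Rightarrow> 'r set" where
  zero: "\<zero>\<^bsub>R\<^esub> \<in> homogeneous_sums R Rh"
| add: "a \<in> Rh d \<Longrightarrow> b \<in> homogeneous_sums R Rh \<Longrightarrow> a \<oplus>\<^bsub>R\<^esub> b \<in> homogeneous_sums R Rh"

lemma homogeneous_sums_carrier:
  assumes "abelian_monoid R" "\<And>d. Rh d \<subseteq> carrier R" "a \<in> homogeneous_sums R Rh"
  shows "a \<in> carrier R"
proof -
  interpret abelian_monoid R by fact
  show ?thesis using assms(3) by induction (use assms(2) in auto)
qed

definition degree0_part :: "('r, 'n) module \<Rightarrow> (int \<Rightarrow> 'n set) \<Rightarrow> ('r, 'i) module \<Rightarrow>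
    (int \<Rightarrow> 'i set) \<Rightarrow> ('n \<Rightarrow> 'i) \<Rightarrow> 'n \<Rightarrow> 'i" where
  "degree0_part N Nh I Ih h n =
     finsum I (\<lambda>d. degree_part I Ih (h (degree_part N Nh n d)) d) (degree_support N Nh n)"

context
  fixes R :: "('r, 'x) ring_scheme" and Rh and N :: "('r, 'n) module" and Nh
    and I :: "('r, 'i) module" and Ih and h
  assumes N: "graded_module R Rh N Nh" and I: "graded_module R Rh I Ih"
    and Rh_carrier: "\<And>e. Rh e \<subseteq> carrier R"
    and h: "abelian_group_hom N I h"
    and h_smult: "\<And>a x. a \<in> carrier R \<Longrightarrow> x \<in> carrier N \<Longrightarrow> h (a \<odot>\<^bsub>N\<^esub> x) = a \<odot>\<^bsub>I\<^esub> h x"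
begin

interpretation N: module R N using N by (rule graded_module_module)
interpretation I: module R I using I by (rule graded_module_module)
interpretation h: abelian_group_hom N I h by (fact h)

lemma degree0_part_summand_carrier:
  "n \<in> carrier N \<Longrightarrow> degree_part I Ih (h (degree_part N Nh n d)) d \<in> carrier I"
  by (simp add: degree_part_carrier[OF I] degree_part_carrier[OF N])

lemma degree0_part_eq_finsum:
  assumes n: "n \<in> carrier N" and S: "finite S" "degree_support N Nh n \<subseteq> S"
  shows "degree0_part N Nh I Ih h n = finsum I (\<lambda>d. degree_part I Ih (h (degree_part N Nh n d)) d) S"
  unfolding degree0_part_def
  using S degree0_part_summand_carrier[OF n]
  by (intro I.add.finprod_mono_neutral_cong_left)
     (auto simp: degree_support_def degree_part_zero[OF I])

lemma degree0_part_carrier: "n \<in> carrier N \<Longrightarrow> degree0_part N Nh I Ih h n \<in> carrier I"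
  unfolding degree0_part_def using degree0_part_summand_carrier by (simp add: Pi_def)

lemma degree0_part_add:
  assumes x: "x \<in> carrier N" and y: "y \<in> carrier N"
  shows "degree0_part N Nh I Ih h (x \<oplus>\<^bsub>N\<^esub> y) =
    degree0_part N Nh I Ih h x \<oplus>\<^bsub>I\<^esub> degree0_part N Nh I Ih h y"
proof -
  let ?S = "degree_support N Nh x \<union> degree_support N Nh y"
  let ?summand = "\<lambda>n d. degree_part I Ih (h (degree_part N Nh n d)) d"
  have S: "finite ?S" using finite_degree_support[OF N] x y by blast
  have support: "degree_support N Nh (x \<oplus>\<^bsub>N\<^esub> y) \<subseteq> ?S"
    using degree_part_add[OF N x y] by (auto simp: degree_support_def)
  have summand_add: "?summand (x \<oplus>\<^bsub>N\<^esub> y) d = ?summand x d \<oplus>\<^bsub>I\<^esub> ?summand y d" for d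
    using x y by (simp add: degree_part_add[OF N] degree_part_carrier[OF N] degree_part_add[OF I])
  have "degree0_part N Nh I Ih h (x \<oplus>\<^bsub>N\<^esub> y) = finsum I (?summand (x \<oplus>\<^bsub>N\<^esub> y)) ?S"
    using x y S support by (intro degree0_part_eq_finsum) auto
  also have "\<dots> = finsum I (?summand x) ?S \<oplus>\<^bsub>I\<^esub> finsum I (?summand y) ?S"
    unfolding summand_add using degree0_part_summand_carrier x y by (intro I.finsum_addf) auto
  also have "\<dots> = degree0_part N Nh I Ih h x \<oplus>\<^bsub>I\<^esub> degree0_part N Nh I Ih h y"
    using degree0_part_eq_finsum[OF x S] degree0_part_eq_finsum[OF y S] by auto
  finally show ?thesis .
qed

lemma degree0_part_smult_homogeneous:
  assumes a: "a \<in> Rh e" and x: "x \<in> carrier N"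
  shows "degree0_part N Nh I Ih h (a \<odot>\<^bsub>N\<^esub> x) = a \<odot>\<^bsub>I\<^esub> degree0_part N Nh I Ih h x"
proof -
  let ?S = "degree_support N Nh x"
  let ?shift = "\<lambda>d. d + e"
  let ?summand = "\<lambda>n d. degree_part I Ih (h (degree_part N Nh n d)) d"
  have a_carrier: "a \<in> carrier R" using a Rh_carrier by blast
  have S: "finite ?S" using finite_degree_support[OF N x] .
  have support: "degree_support N Nh (a \<odot>\<^bsub>N\<^esub> x) \<subseteq> ?shift ` ?S"
  proof
    fix d assume "d \<in> degree_support N Nh (a \<odot>\<^bsub>N\<^esub> x)"
    then have "d - e \<in> ?S"
      using a_carrier by (auto simp: degree_support_def degree_part_smult[OF N Rh_carrier a x])
    then show "d \<in> ?shift ` ?S" by force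
  qed
  have summand_smult: "?summand (a \<odot>\<^bsub>N\<^esub> x) d = a \<odot>\<^bsub>I\<^esub> ?summand x (d - e)" for d
    using a_carrier x
    by (simp add: degree_part_smult[OF N Rh_carrier a] degree_part_carrier[OF N] h_smult
        degree_part_smult[OF I Rh_carrier a])
  have "degree0_part N Nh I Ih h (a \<odot>\<^bsub>N\<^esub> x) = finsum I (?summand (a \<odot>\<^bsub>N\<^esub> x)) (?shift ` ?S)"
    using a_carrier x S support by (intro degree0_part_eq_finsum) auto
  also have "\<dots> = finsum I (\<lambda>d. a \<odot>\<^bsub>I\<^esub> ?summand x d) ?S"
    unfolding summand_smult using a_carrier degree0_part_summand_carrier[OF x]
    by (subst I.finsum_reindex) (auto simp: inj_on_def)
  also have "\<dots> = a \<odot>\<^bsub>I\<^esub> degree0_part N Nh I Ih h x"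
    unfolding degree0_part_def using S a_carrier degree0_part_summand_carrier[OF x]
    by (intro I.finsum_smult_ldistr[symmetric]) auto
  finally show ?thesis .
qed

lemma degree0_part_smult:
  assumes generated: "carrier R \<subseteq> homogeneous_sums R Rh"
    and a: "a \<in> carrier R" and x: "x \<in> carrier N"
  shows "degree0_part N Nh I Ih h (a \<odot>\<^bsub>N\<^esub> x) = a \<odot>\<^bsub>I\<^esub> degree0_part N Nh I Ih h x"
proof -
  have "a \<in> homogeneous_sums R Rh" using generated a by blast
  then show ?thesis
  proof induction
    case zero
    have "degree_support N Nh \<zero>\<^bsub>N\<^esub> = {}"
      by (simp add: degree_support_def degree_part_zero[OF N])
    then show ?case using x degree0_part_carrier[OF x] by (simp add: degree0_part_def)
  next
    case (add c d b)
    have c: "c \<in> carrier R" using add.hyps(1) Rh_carrier by blast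
    have b: "b \<in> carrier R"
      using homogeneous_sums_carrier[OF _ Rh_carrier add.hyps(2)] N.is_cring
      by (simp add: cring_def ring_def abelian_group_def)
    then show ?case
      using c x add.IH degree0_part_smult_homogeneous[OF add.hyps(1) x] degree0_part_carrier[OF x]
      by (simp add: N.smult_l_distr I.smult_l_distr degree0_part_add)
  qed
qed

lemma degree0_part_homogeneous:
  assumes x: "x \<in> Nh e"
  shows "degree0_part N Nh I Ih h x \<in> Ih e"
proof -
  have x_carrier: "x \<in> carrier N" using homogeneous_in_carrier[OF N x] .
  have "degree_support N Nh x \<subseteq> {e}"
    by (auto simp: degree_support_def degree_part_of_homogeneous[OF N x])
  then have "degree0_part N Nh I Ih h x = degree_part I Ih (h x) e"
    using degree0_part_eq_finsum[OF x_carrier, of "{e}"] degree0_part_summand_carrier[OF x_carrier, of e]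
    by (simp add: degree_part_of_homogeneous[OF N x])
  then show ?thesis using degree_part_homogeneous[OF I] x_carrier by simp
qed

lemma graded_hom_degree0_part:
  assumes "carrier R \<subseteq> homogeneous_sums R Rh"
  shows "graded_hom R N Nh I Ih (degree0_part N Nh I Ih h)"
  unfolding graded_hom_def
  using degree0_part_carrier degree0_part_add degree0_part_smult[OF assms] degree0_part_homogeneous
  by blast

lemma degree0_part_equation:
  assumes J: "graded_module R' Rh' J Jh"
    and Q: "abelian_group_hom I J Q" "\<And>d. Q ` Ih d \<subseteq> Jh d"
    and \<beta>: "abelian_group_hom N J \<beta>" "\<And>d. \<beta> ` Nh d \<subseteq> Jh d"
    and Q_h: "\<And>n. n \<in> carrier N \<Longrightarrow> Q (h n) = \<beta> n"
    and n: "n \<in> carrier N"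
  shows "Q (degree0_part N Nh I Ih h n) = \<beta> n"
proof -
  interpret Q: abelian_group_hom I J Q by (fact Q(1))
  interpret \<beta>: abelian_group_hom N J \<beta> by (fact \<beta>(1))
  let ?S = "degree_support N Nh n"
  have S: "finite ?S" using finite_degree_support[OF N n] .
  have summand: "Q (degree_part I Ih (h (degree_part N Nh n d)) d) = \<beta> (degree_part N Nh n d)" for d
  proof -
    have "\<beta> (degree_part N Nh n d) \<in> Jh d"
      using \<beta>(2) degree_part_homogeneous[OF N n] by blast
    then have "degree_part J Jh (\<beta> (degree_part N Nh n d)) d = \<beta> (degree_part N Nh n d)"
      by (simp add: degree_part_of_homogeneous[OF J])
    moreover have "Q (degree_part I Ih (h (degree_part N Nh n d)) d) =
        degree_part J Jh (Q (h (degree_part N Nh n d))) d"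
      using degree_part_carrier[OF N n] by (simp add: degree_part_map[OF I J Q])
    ultimately show ?thesis
      using degree_part_carrier[OF N n] Q_h by simp
  qed
  have "Q (degree0_part N Nh I Ih h n) = finsum J (\<lambda>d. \<beta> (degree_part N Nh n d)) ?S"
    unfolding degree0_part_def using S degree0_part_summand_carrier[OF n]
    by (simp add: Q.hom_finsum summand Pi_def)
  also have "\<dots> = \<beta> n"
    using S degree_part_carrier[OF N n] finsum_degree_parts[OF N n S]
    by (simp add: \<beta>.hom_finsum[symmetric] Pi_def)
  finally show ?thesis .
qed

end

lemma Ahom_carrier: "Ahom \<sigma> e \<subseteq> carrier (A \<sigma>)"
  by (auto simp: Ahom_def)

lemma rs_carrier:
  assumes a: "a \<in> carrier (A \<sigma>)" and "\<xi> \<subseteq> \<sigma>"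
  shows "rs \<xi> a \<in> carrier (A \<xi>)"
proof -
  obtain f where f: "f \<in> polyfun" "a = rs \<sigma> f" using a by (auto simp: A_def)
  have "span \<xi> \<subseteq> span \<sigma>" using \<open>\<xi> \<subseteq> \<sigma>\<close> by (rule span_mono)
  then have "rs \<xi> a = rs \<xi> f" using f(2) unfolding rs_def by (intro ext) auto
  then show ?thesis using f(1) by (simp add: A_def)
qed

lemma Ahom_mult:
  assumes a: "a \<in> Ahom \<sigma> d" and b: "b \<in> Ahom \<sigma> e"
  shows "a \<otimes>\<^bsub>A \<sigma>\<^esub> b \<in> Ahom \<sigma> (d + e)"
proof -
  obtain f g where fg: "f \<in> polyfun" "a = rs \<sigma> f" "g \<in> polyfun" "b = rs \<sigma> g"
    using a b by (auto simp: Ahom_def A_def)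
  have "a \<otimes>\<^bsub>A \<sigma>\<^esub> b = rs \<sigma> (\<lambda>x. f x * g x)"
    using fg by (auto simp: A_def rs_def)
  then have carrier: "a \<otimes>\<^bsub>A \<sigma>\<^esub> b \<in> carrier (A \<sigma>)"
    using polyfun.mult[OF fg(1,3)] by (auto simp: A_def intro!: imageI)
  show ?thesis
  proof (cases "a = (\<lambda>x. 0) \<or> b = (\<lambda>x. 0)")
    case True
    then show ?thesis using carrier by (auto simp: Ahom_def A_def)
  next
    case False
    then obtain k l where
      k: "d = 2 * int k" "\<forall>t::real. \<forall>x\<in>span \<sigma>. a (t *\<^sub>R x) = complex_of_real t ^ k * a x" and
      l: "e = 2 * int l" "\<forall>t::real. \<forall>x\<in>span \<sigma>. b (t *\<^sub>R x) = complex_of_real t ^ l * b x"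
      using a b by (auto simp: Ahom_def)
    have "d + e = 2 * int (k + l)" using k l by simp
    moreover have "\<forall>t::real. \<forall>x\<in>span \<sigma>. (a \<otimes>\<^bsub>A \<sigma>\<^esub> b) (t *\<^sub>R x) =
        complex_of_real t ^ (k + l) * (a \<otimes>\<^bsub>A \<sigma>\<^esub> b) x"
      using k(2) l(2) by (simp add: A_def power_add)
    ultimately show ?thesis using carrier unfolding Ahom_def by blast
  qed
qed

lemma Ahom_homogeneous_sums: "a \<in> Ahom \<sigma> d \<Longrightarrow> a \<in> homogeneous_sums (A \<sigma>) (Ahom \<sigma>)"
  using homogeneous_sums.add[OF _ homogeneous_sums.zero, of a "Ahom \<sigma>" d "A \<sigma>"]
  by (simp add: A_def)

lemma A_homogeneous_sums_add:
  assumes "a \<in> homogeneous_sums (A \<sigma>) (Ahom \<sigma>)" "b \<in> homogeneous_sums (A \<sigma>) (Ahom \<sigma>)"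
  shows "a \<oplus>\<^bsub>A \<sigma>\<^esub> b \<in> homogeneous_sums (A \<sigma>) (Ahom \<sigma>)"
  using assms
proof induction
  case zero
  then show ?case by (simp add: A_def)
next
  case (add c d a)
  have "(c \<oplus>\<^bsub>A \<sigma>\<^esub> a) \<oplus>\<^bsub>A \<sigma>\<^esub> b = c \<oplus>\<^bsub>A \<sigma>\<^esub> (a \<oplus>\<^bsub>A \<sigma>\<^esub> b)"
    by (simp add: A_def add.assoc)
  then show ?case using add by (simp add: homogeneous_sums.add)
qed

lemma A_homogeneous_sums_mult_Ahom:
  assumes "a \<in> Ahom \<sigma> d" "b \<in> homogeneous_sums (A \<sigma>) (Ahom \<sigma>)"
  shows "a \<otimes>\<^bsub>A \<sigma>\<^esub> b \<in> homogeneous_sums (A \<sigma>) (Ahom \<sigma>)"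
  using assms(2)
proof induction
  case zero
  then show ?case using homogeneous_sums.zero[of "A \<sigma>"] by (simp add: A_def)
next
  case (add c e b)
  have "a \<otimes>\<^bsub>A \<sigma>\<^esub> (c \<oplus>\<^bsub>A \<sigma>\<^esub> b) = a \<otimes>\<^bsub>A \<sigma>\<^esub> c \<oplus>\<^bsub>A \<sigma>\<^esub> a \<otimes>\<^bsub>A \<sigma>\<^esub> b"
    by (simp add: A_def distrib_left)
  then show ?case
    using homogeneous_sums.add[OF Ahom_mult[OF assms(1) add.hyps(1)] add.IH] by simp
qed

lemma A_homogeneous_sums_mult:
  assumes "a \<in> homogeneous_sums (A \<sigma>) (Ahom \<sigma>)" "b \<in> homogeneous_sums (A \<sigma>) (Ahom \<sigma>)"
  shows "a \<otimes>\<^bsub>A \<sigma>\<^esub> b \<in> homogeneous_sums (A \<sigma>) (Ahom \<sigma>)"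
  using assms
proof induction
  case zero
  then show ?case using homogeneous_sums.zero[of "A \<sigma>"] by (simp add: A_def)
next
  case (add c d a)
  have "(c \<oplus>\<^bsub>A \<sigma>\<^esub> a) \<otimes>\<^bsub>A \<sigma>\<^esub> b = c \<otimes>\<^bsub>A \<sigma>\<^esub> b \<oplus>\<^bsub>A \<sigma>\<^esub> a \<otimes>\<^bsub>A \<sigma>\<^esub> b"
    by (simp add: A_def distrib_right)
  then show ?case
    using A_homogeneous_sums_add[OF A_homogeneous_sums_mult_Ahom[OF add.hyps(1) add.prems] add.IH[OF add.prems]]
    by simp
qed

lemma A_carrier_homogeneous_sums: "carrier (A \<sigma>) \<subseteq> homogeneous_sums (A \<sigma>) (Ahom \<sigma>)"
proof
  fix a assume "a \<in> carrier (A \<sigma>)"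
  then obtain f where f: "f \<in> polyfun" "a = rs \<sigma> f" by (auto simp: A_def)
  have "rs \<sigma> f \<in> homogeneous_sums (A \<sigma>) (Ahom \<sigma>)"
    using f(1)
  proof induction
    case (const c)
    have "rs \<sigma> (\<lambda>x. c) \<in> Ahom \<sigma> 0"
      using polyfun.const[of c] by (auto simp: Ahom_def A_def rs_def span_mul intro!: exI[of _ 0])
    then show ?case by (rule Ahom_homogeneous_sums)
  next
    case (lin v)
    have "rs \<sigma> (\<lambda>x. complex_of_real (v \<bullet> x)) \<in> Ahom \<sigma> 2"
      using polyfun.lin[of v] by (auto simp: Ahom_def A_def rs_def span_mul intro!: exI[of _ 1])
    then show ?case by (rule Ahom_homogeneous_sums)
  next
    case (add f g)
    have "rs \<sigma> (\<lambda>x. f x + g x) = rs \<sigma> f \<oplus>\<^bsub>A \<sigma>\<^esub> rs \<sigma> g"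
      by (auto simp: A_def rs_def)
    then show ?case using add A_homogeneous_sums_add by simp
  next
    case (mult f g)
    have "rs \<sigma> (\<lambda>x. f x * g x) = rs \<sigma> f \<otimes>\<^bsub>A \<sigma>\<^esub> rs \<sigma> g"
      by (auto simp: A_def rs_def)
    then show ?case using mult A_homogeneous_sums_mult by simp
  qed
  then show "a \<in> homogeneous_sums (A \<sigma>) (Ahom \<sigma>)" using f(2) by simp
qed

section \<open>Free modules\<close>

definition finite_basis :: "('r, 'x) ring_scheme \<Rightarrow> ('r, 'm) module \<Rightarrow> 'm set \<Rightarrow> bool" where
  "finite_basis R N B \<longleftrightarrow> finite B \<and> B \<subseteq> carrier N \<and>
     (\<forall>x\<in>carrier N. \<exists>!a. a \<in> B \<rightarrow>\<^sub>E carrier R \<and> x = (\<Oplus>\<^bsub>N\<^esub>b\<in>B. a b \<odot>\<^bsub>N\<^esub> b))"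

definition basis_coords :: "('r, 'x) ring_scheme \<Rightarrow> ('r, 'm) module \<Rightarrow> 'm set \<Rightarrow> 'm \<Rightarrow> 'm \<Rightarrow> 'r" where
  "basis_coords R N B x = (THE a. a \<in> B \<rightarrow>\<^sub>E carrier R \<and> x = (\<Oplus>\<^bsub>N\<^esub>b\<in>B. a b \<odot>\<^bsub>N\<^esub> b))"

definition basis_extension :: "('r, 'x) ring_scheme \<Rightarrow> ('r, 'm) module \<Rightarrow> ('r, 'i) module \<Rightarrow>
    'm set \<Rightarrow> ('m \<Rightarrow> 'i) \<Rightarrow> 'm \<Rightarrow> 'i" where
  "basis_extension R N I B v x = (\<Oplus>\<^bsub>I\<^esub>b\<in>B. basis_coords R N B x b \<odot>\<^bsub>I\<^esub> v b)"

lemma free_module_finite_basis: "free_module R N \<Longrightarrow> \<exists>B. finite_basis R N B"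
  by (simp add: free_module_def finite_basis_def)

context
  fixes R :: "('r, 'x) ring_scheme" and N :: "('r, 'm) module" and B
  assumes N: "module R N" and B: "finite_basis R N B"
begin

interpretation N: module R N by (fact N)

lemma basis_coords:
  assumes "x \<in> carrier N"
  shows "basis_coords R N B x \<in> B \<rightarrow>\<^sub>E carrier R"
    and "x = (\<Oplus>\<^bsub>N\<^esub>b\<in>B. basis_coords R N B x b \<odot>\<^bsub>N\<^esub> b)"
  using theI'[of "\<lambda>a. a \<in> B \<rightarrow>\<^sub>E carrier R \<and> x = (\<Oplus>\<^bsub>N\<^esub>b\<in>B. a b \<odot>\<^bsub>N\<^esub> b)"] B assms
  unfolding finite_basis_def basis_coords_def[symmetric] by blast+

lemma basis_coords_unique:
  assumes "a \<in> B \<rightarrow>\<^sub>E carrier R" "(\<Oplus>\<^bsub>N\<^esub>b\<in>B. a b \<odot>\<^bsub>N\<^esub> b) \<in> carrier N"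
  shows "basis_coords R N B (\<Oplus>\<^bsub>N\<^esub>b\<in>B. a b \<odot>\<^bsub>N\<^esub> b) = a"
  unfolding basis_coords_def using assms B unfolding finite_basis_def
  by (intro the1_equality) auto

lemma basis_coords_carrier: "x \<in> carrier N \<Longrightarrow> b \<in> B \<Longrightarrow> basis_coords R N B x b \<in> carrier R"
  using basis_coords(1) by blast

lemma basis_coords_add:
  assumes x: "x \<in> carrier N" and y: "y \<in> carrier N"
  shows "basis_coords R N B (x \<oplus>\<^bsub>N\<^esub> y) = (\<lambda>b\<in>B. basis_coords R N B x b \<oplus>\<^bsub>R\<^esub> basis_coords R N B y b)"
proof -
  have B_carrier: "B \<subseteq> carrier N" using B by (simp add: finite_basis_def)
  have "x \<oplus>\<^bsub>N\<^esub> y = (\<Oplus>\<^bsub>N\<^esub>b\<in>B. basis_coords R N B x b \<odot>\<^bsub>N\<^esub> b) \<oplus>\<^bsub>N\<^esub>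
      (\<Oplus>\<^bsub>N\<^esub>b\<in>B. basis_coords R N B y b \<odot>\<^bsub>N\<^esub> b)"
    using basis_coords(2)[OF x] basis_coords(2)[OF y] by (rule arg_cong2)
  also have "\<dots> = (\<Oplus>\<^bsub>N\<^esub>b\<in>B. basis_coords R N B x b \<odot>\<^bsub>N\<^esub> b \<oplus>\<^bsub>N\<^esub> basis_coords R N B y b \<odot>\<^bsub>N\<^esub> b)"
    using basis_coords_carrier x y B_carrier by (simp add: N.finsum_addf Pi_def subset_eq)
  also have "\<dots> = (\<Oplus>\<^bsub>N\<^esub>b\<in>B. (basis_coords R N B x b \<oplus>\<^bsub>R\<^esub> basis_coords R N B y b) \<odot>\<^bsub>N\<^esub> b)"
    using basis_coords_carrier x y B_carrier by (intro N.finsum_cong') (auto simp: N.smult_l_distr)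
  also have "\<dots> = (\<Oplus>\<^bsub>N\<^esub>b\<in>B. (\<lambda>b\<in>B. basis_coords R N B x b \<oplus>\<^bsub>R\<^esub> basis_coords R N B y b) b \<odot>\<^bsub>N\<^esub> b)"
    by (intro N.finsum_cong') (use basis_coords_carrier x y B_carrier in auto)
  finally have eq: "x \<oplus>\<^bsub>N\<^esub> y = (\<Oplus>\<^bsub>N\<^esub>b\<in>B. (\<lambda>b\<in>B. basis_coords R N B x b \<oplus>\<^bsub>R\<^esub> basis_coords R N B y b) b \<odot>\<^bsub>N\<^esub> b)" .
  have "(\<lambda>b\<in>B. basis_coords R N B x b \<oplus>\<^bsub>R\<^esub> basis_coords R N B y b) \<in> B \<rightarrow>\<^sub>E carrier R"
    using basis_coords_carrier x y by auto
  from basis_coords_unique[OF this] show ?thesis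
    unfolding eq[symmetric] using x y by simp
qed

lemma basis_coords_smult:
  assumes c: "c \<in> carrier R" and x: "x \<in> carrier N"
  shows "basis_coords R N B (c \<odot>\<^bsub>N\<^esub> x) = (\<lambda>b\<in>B. c \<otimes>\<^bsub>R\<^esub> basis_coords R N B x b)"
proof -
  have B_carrier: "B \<subseteq> carrier N" and B_finite: "finite B"
    using B by (simp_all add: finite_basis_def)
  have "c \<odot>\<^bsub>N\<^esub> x = c \<odot>\<^bsub>N\<^esub> (\<Oplus>\<^bsub>N\<^esub>b\<in>B. basis_coords R N B x b \<odot>\<^bsub>N\<^esub> b)"
    using basis_coords(2)[OF x] by (rule arg_cong)
  also have "\<dots> = (\<Oplus>\<^bsub>N\<^esub>b\<in>B. c \<odot>\<^bsub>N\<^esub> (basis_coords R N B x b \<odot>\<^bsub>N\<^esub> b))"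
    using basis_coords_carrier x c B_carrier B_finite
    by (intro N.finsum_smult_ldistr) (auto simp: subset_eq)
  also have "\<dots> = (\<Oplus>\<^bsub>N\<^esub>b\<in>B. (\<lambda>b\<in>B. c \<otimes>\<^bsub>R\<^esub> basis_coords R N B x b) b \<odot>\<^bsub>N\<^esub> b)"
    using basis_coords_carrier x c B_carrier by (intro N.finsum_cong') (auto simp: N.smult_assoc1)
  finally have eq: "c \<odot>\<^bsub>N\<^esub> x = (\<Oplus>\<^bsub>N\<^esub>b\<in>B. (\<lambda>b\<in>B. c \<otimes>\<^bsub>R\<^esub> basis_coords R N B x b) b \<odot>\<^bsub>N\<^esub> b)" .
  have "(\<lambda>b\<in>B. c \<otimes>\<^bsub>R\<^esub> basis_coords R N B x b) \<in> B \<rightarrow>\<^sub>E carrier R"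
    using basis_coords_carrier x c by auto
  from basis_coords_unique[OF this] show ?thesis
    unfolding eq[symmetric] using x c by simp
qed

lemma basis_extension_linear:
  assumes I: "module R I" and v: "v \<in> B \<rightarrow> carrier I"
  shows "abelian_group_hom N I (basis_extension R N I B v)"
    and "\<And>c x. c \<in> carrier R \<Longrightarrow> x \<in> carrier N \<Longrightarrow>
      basis_extension R N I B v (c \<odot>\<^bsub>N\<^esub> x) = c \<odot>\<^bsub>I\<^esub> basis_extension R N I B v x"
proof -
  interpret I: module R I by (fact I)
  have B_finite: "finite B" using B by (simp add: finite_basis_def)
  have v_carrier: "\<And>b. b \<in> B \<Longrightarrow> v b \<in> carrier I" using v by blast
  let ?h = "basis_extension R N I B v"
  have "?h (x \<oplus>\<^bsub>N\<^esub> y) = ?h x \<oplus>\<^bsub>I\<^esub> ?h y" if x: "x \<in> carrier N" and y: "y \<in> carrier N" for x y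
  proof -
    have "?h (x \<oplus>\<^bsub>N\<^esub> y) =
        (\<Oplus>\<^bsub>I\<^esub>b\<in>B. basis_coords R N B x b \<odot>\<^bsub>I\<^esub> v b \<oplus>\<^bsub>I\<^esub> basis_coords R N B y b \<odot>\<^bsub>I\<^esub> v b)"
      unfolding basis_extension_def basis_coords_add[OF x y]
      using basis_coords_carrier x y v_carrier by (intro I.finsum_cong') (auto simp: I.smult_l_distr)
    then show ?thesis
      unfolding basis_extension_def using basis_coords_carrier x y v_carrier by (simp add: I.finsum_addf Pi_def)
  qed
  then show "abelian_group_hom N I ?h"
    using basis_coords_carrier v_carrier
    by (intro abelian_group_homI' N.abelian_group_axioms I.abelian_group_axioms)
       (auto simp: basis_extension_def Pi_def)
  show "?h (c \<odot>\<^bsub>N\<^esub> x) = c \<odot>\<^bsub>I\<^esub> ?h x" if c: "c \<in> carrier R" and x: "x \<in> carrier N" for c x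
  proof -
    have "?h (c \<odot>\<^bsub>N\<^esub> x) = (\<Oplus>\<^bsub>I\<^esub>b\<in>B. c \<odot>\<^bsub>I\<^esub> (basis_coords R N B x b \<odot>\<^bsub>I\<^esub> v b))"
      unfolding basis_extension_def basis_coords_smult[OF c x]
      using basis_coords_carrier c x v_carrier by (intro I.finsum_cong') (auto simp: I.smult_assoc1)
    then show ?thesis
      unfolding basis_extension_def using basis_coords_carrier c x v_carrier B_finite
      by (simp add: I.finsum_smult_ldistr Pi_def)
  qed
qed

end

text \<open>Projectivity of free modules, with the surjection onto \<open>N\<close> replaced by a linear relation
  \<open>K \<subseteq> I \<times> N\<close> that relates every element of \<open>N\<close> to some element of \<open>I\<close>.\<close>

lemma free_module_lift:
  fixes R :: "('r, 'x) ring_scheme" and N :: "('r, 'm) module" and I :: "('r, 'i) module"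
  assumes N: "module R N" and I: "module R I" and free: "free_module R N"
    and zero: "(\<zero>\<^bsub>I\<^esub>, \<zero>\<^bsub>N\<^esub>) \<in> K"
    and add: "\<And>x n y m. (x, n) \<in> K \<Longrightarrow> (y, m) \<in> K \<Longrightarrow> (x \<oplus>\<^bsub>I\<^esub> y, n \<oplus>\<^bsub>N\<^esub> m) \<in> K"
    and smult: "\<And>a x n. a \<in> carrier R \<Longrightarrow> (x, n) \<in> K \<Longrightarrow> (a \<odot>\<^bsub>I\<^esub> x, a \<odot>\<^bsub>N\<^esub> n) \<in> K"
    and surj: "\<And>n. n \<in> carrier N \<Longrightarrow> \<exists>x\<in>carrier I. (x, n) \<in> K"
  shows "\<exists>h. abelian_group_hom N I h \<and>
    (\<forall>a\<in>carrier R. \<forall>x\<in>carrier N. h (a \<odot>\<^bsub>N\<^esub> x) = a \<odot>\<^bsub>I\<^esub> h x) \<and> (\<forall>n\<in>carrier N. (h n, n) \<in> K)"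
proof -
  interpret N: module R N by (fact N)
  interpret I: module R I by (fact I)
  obtain B where B: "finite_basis R N B" using free_module_finite_basis[OF free] ..
  have B_finite: "finite B" and B_carrier: "B \<subseteq> carrier N"
    using B by (simp_all add: finite_basis_def)
  obtain lift where lift: "\<And>b. b \<in> B \<Longrightarrow> lift b \<in> carrier I \<and> (lift b, b) \<in> K"
    using surj B_carrier by (metis subset_eq)
  have sums_in_K: "((\<Oplus>\<^bsub>I\<^esub>b\<in>T. a b \<odot>\<^bsub>I\<^esub> lift b), (\<Oplus>\<^bsub>N\<^esub>b\<in>T. a b \<odot>\<^bsub>N\<^esub> b)) \<in> K"
    if "a \<in> B \<rightarrow> carrier R" "T \<subseteq> B" for a T
    using finite_subset[OF \<open>T \<subseteq> B\<close> B_finite] \<open>T \<subseteq> B\<close>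
  proof (induction T rule: finite_subset_induct')
    case empty
    then show ?case using zero by simp
  next
    case (insert b T)
    have "a b \<in> carrier R" "lift b \<in> carrier I" "b \<in> carrier N"
      using that(1) lift B_carrier insert.hyps by auto
    moreover have "(a b \<odot>\<^bsub>I\<^esub> lift b \<oplus>\<^bsub>I\<^esub> (\<Oplus>\<^bsub>I\<^esub>b\<in>T. a b \<odot>\<^bsub>I\<^esub> lift b),
        a b \<odot>\<^bsub>N\<^esub> b \<oplus>\<^bsub>N\<^esub> (\<Oplus>\<^bsub>N\<^esub>b\<in>T. a b \<odot>\<^bsub>N\<^esub> b)) \<in> K"
      using add smult insert lift \<open>a b \<in> carrier R\<close> by blast
    ultimately show ?case
      using insert.hyps that(1) lift B_carrier by (simp add: Pi_def subset_eq)
  qed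
  have "(basis_extension R N I B lift n, n) \<in> K" if "n \<in> carrier N" for n
    using sums_in_K[of "basis_coords R N B n" B] basis_coords[OF N B that]
    unfolding basis_extension_def by auto
  moreover have "lift \<in> B \<rightarrow> carrier I" using lift by blast
  ultimately show ?thesis using basis_extension_linear[OF N B I] by blast
qed

lemma graded_hom_abelian_group_hom:
  assumes "graded_module R Rh M Mh" "graded_module R Rh' N Nh" "graded_hom R M Mh N Nh f"
  shows "abelian_group_hom M N f"
  using assms
  by (intro abelian_group_homI' graded_module_abelian_group) (auto simp: graded_hom_def)

lemma graded_hom_id: "graded_hom R M Mh M Mh (\<lambda>x. x)"
  by (simp add: graded_hom_def)

lemma graded_hom_comp:
  assumes "graded_hom R M Mh N Nh f" "graded_hom R N Nh P Ph g"
  shows "graded_hom R M Mh P Ph (\<lambda>x. g (f x))"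
  using assms unfolding graded_hom_def by (auto simp: Pi_def image_subset_iff)

lemma graded_hom_add:
  assumes N: "graded_module R Rh N Nh"
    and f: "graded_hom R M Mh N Nh f" and g: "graded_hom R M Mh N Nh g"
  shows "graded_hom R M Mh N Nh (\<lambda>x. f x \<oplus>\<^bsub>N\<^esub> g x)"
proof -
  interpret N: module R N using N by (rule graded_module_module)
  have closed: "f x \<in> carrier N" "g x \<in> carrier N" if "x \<in> carrier M" for x
    using f g that by (auto simp: graded_hom_def)
  show ?thesis
    unfolding graded_hom_def
  proof (intro conjI ballI allI)
    show "(\<lambda>x. f x \<oplus>\<^bsub>N\<^esub> g x) \<in> carrier M \<rightarrow> carrier N"
      using closed by auto
  next
    fix x y assume "x \<in> carrier M" "y \<in> carrier M"
    moreover have "f (x \<oplus>\<^bsub>M\<^esub> y) = f x \<oplus>\<^bsub>N\<^esub> f y" "g (x \<oplus>\<^bsub>M\<^esub> y) = g x \<oplus>\<^bsub>N\<^esub> g y"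
      using f g calculation by (simp_all add: graded_hom_def)
    ultimately show "f (x \<oplus>\<^bsub>M\<^esub> y) \<oplus>\<^bsub>N\<^esub> g (x \<oplus>\<^bsub>M\<^esub> y) = f x \<oplus>\<^bsub>N\<^esub> g x \<oplus>\<^bsub>N\<^esub> (f y \<oplus>\<^bsub>N\<^esub> g y)"
      using closed by (simp add: N.a_ac)
  next
    fix a x assume "a \<in> carrier R" "x \<in> carrier M"
    moreover have "f (a \<odot>\<^bsub>M\<^esub> x) = a \<odot>\<^bsub>N\<^esub> f x" "g (a \<odot>\<^bsub>M\<^esub> x) = a \<odot>\<^bsub>N\<^esub> g x"
      using f g calculation by (simp_all add: graded_hom_def)
    ultimately show "f (a \<odot>\<^bsub>M\<^esub> x) \<oplus>\<^bsub>N\<^esub> g (a \<odot>\<^bsub>M\<^esub> x) = a \<odot>\<^bsub>N\<^esub> (f x \<oplus>\<^bsub>N\<^esub> g x)"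
      using closed by (simp add: N.smult_r_distr)
  next
    fix d
    have "f ` Mh d \<subseteq> Nh d" "g ` Mh d \<subseteq> Nh d"
      using f g by (simp_all add: graded_hom_def)
    then show "(\<lambda>x. f x \<oplus>\<^bsub>N\<^esub> g x) ` Mh d \<subseteq> Nh d"
      using add_homogeneous[OF N] by blast
  qed
qed

lemma graded_hom_diff:
  assumes N: "graded_module R Rh N Nh"
    and f: "graded_hom R M Mh N Nh f" and g: "graded_hom R M Mh N Nh g"
  shows "graded_hom R M Mh N Nh (\<lambda>x. f x \<ominus>\<^bsub>N\<^esub> g x)"
proof -
  interpret N: module R N using N by (rule graded_module_module)
  have closed: "f x \<in> carrier N" "g x \<in> carrier N" if "x \<in> carrier M" for x
    using f g that by (auto simp: graded_hom_def)
  show ?thesis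
    unfolding graded_hom_def
  proof (intro conjI ballI allI)
    show "(\<lambda>x. f x \<ominus>\<^bsub>N\<^esub> g x) \<in> carrier M \<rightarrow> carrier N"
      using closed by auto
  next
    fix x y assume "x \<in> carrier M" "y \<in> carrier M"
    moreover have "f (x \<oplus>\<^bsub>M\<^esub> y) = f x \<oplus>\<^bsub>N\<^esub> f y" "g (x \<oplus>\<^bsub>M\<^esub> y) = g x \<oplus>\<^bsub>N\<^esub> g y"
      using f g calculation by (simp_all add: graded_hom_def)
    ultimately show "f (x \<oplus>\<^bsub>M\<^esub> y) \<ominus>\<^bsub>N\<^esub> g (x \<oplus>\<^bsub>M\<^esub> y) = f x \<ominus>\<^bsub>N\<^esub> g x \<oplus>\<^bsub>N\<^esub> (f y \<ominus>\<^bsub>N\<^esub> g y)"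
      using closed by (simp add: N.minus_eq N.minus_add N.a_ac)
  next
    fix a x assume "a \<in> carrier R" "x \<in> carrier M"
    moreover have "f (a \<odot>\<^bsub>M\<^esub> x) = a \<odot>\<^bsub>N\<^esub> f x" "g (a \<odot>\<^bsub>M\<^esub> x) = a \<odot>\<^bsub>N\<^esub> g x"
      using f g calculation by (simp_all add: graded_hom_def)
    ultimately show "f (a \<odot>\<^bsub>M\<^esub> x) \<ominus>\<^bsub>N\<^esub> g (a \<odot>\<^bsub>M\<^esub> x) = a \<odot>\<^bsub>N\<^esub> (f x \<ominus>\<^bsub>N\<^esub> g x)"
      using closed by (simp add: N.minus_eq N.smult_r_distr N.smult_r_minus)
  next
    fix d
    have "f ` Mh d \<subseteq> Nh d" "g ` Mh d \<subseteq> Nh d"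
      using f g by (simp_all add: graded_hom_def)
    then show "(\<lambda>x. f x \<ominus>\<^bsub>N\<^esub> g x) ` Mh d \<subseteq> Nh d"
      using minus_homogeneous[OF N] by blast
  qed
qed

lemma graded_hom_split_extension:
  assumes N: "graded_module R Rh N Nh" and I: "graded_module R Rh I Ih"
    and \<eta>: "graded_hom R M Mh N Nh \<eta>" and r: "graded_hom R N Nh M Mh r"
    and r_\<eta>: "\<And>x. x \<in> carrier M \<Longrightarrow> r (\<eta> x) = x"
    and \<phi>: "graded_hom R M Mh I Ih \<phi>" and c: "graded_hom R N Nh I Ih c"
  shows "graded_hom R N Nh I Ih (\<lambda>n. \<phi> (r n) \<oplus>\<^bsub>I\<^esub> c (n \<ominus>\<^bsub>N\<^esub> \<eta> (r n)))"
    and "\<And>x. x \<in> carrier M \<Longrightarrow> \<phi> (r (\<eta> x)) \<oplus>\<^bsub>I\<^esub> c (\<eta> x \<ominus>\<^bsub>N\<^esub> \<eta> (r (\<eta> x))) = \<phi> x"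
proof -
  interpret N: module R N using N by (rule graded_module_module)
  interpret I: module R I using I by (rule graded_module_module)
  interpret c: abelian_group_hom N I c using graded_hom_abelian_group_hom[OF N I c] .
  show "graded_hom R N Nh I Ih (\<lambda>n. \<phi> (r n) \<oplus>\<^bsub>I\<^esub> c (n \<ominus>\<^bsub>N\<^esub> \<eta> (r n)))"
    using graded_hom_add[OF I graded_hom_comp[OF r \<phi>]
        graded_hom_comp[OF graded_hom_diff[OF N graded_hom_id graded_hom_comp[OF r \<eta>]] c]] .
  show "\<phi> (r (\<eta> x)) \<oplus>\<^bsub>I\<^esub> c (\<eta> x \<ominus>\<^bsub>N\<^esub> \<eta> (r (\<eta> x))) = \<phi> x" if x: "x \<in> carrier M" for x
  proof -
    have "\<eta> x \<in> carrier N" "\<phi> x \<in> carrier I"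
      using \<eta> \<phi> x by (auto simp: graded_hom_def)
    then show ?thesis using x by (simp add: r_\<eta> N.minus_eq N.r_neg)
  qed
qed

lemma A_module_graded:
  "A_module \<Sigma> X \<Longrightarrow> \<tau> \<in> \<Sigma> \<Longrightarrow> graded_module (A \<tau>) (Ahom \<tau>) (Mod X \<tau>) (Deg X \<tau>)"
  unfolding A_module_def by blast

lemma A_module_Res:
  assumes "A_module \<Sigma> X" "\<tau> \<in> \<Sigma>" "cface \<xi> \<tau>"
  shows "Res X \<tau> \<xi> \<in> carrier (Mod X \<tau>) \<rightarrow> carrier (Mod X \<xi>)"
    and "\<And>x y. x \<in> carrier (Mod X \<tau>) \<Longrightarrow> y \<in> carrier (Mod X \<tau>) \<Longrightarrow>
           Res X \<tau> \<xi> (x \<oplus>\<^bsub>Mod X \<tau>\<^esub> y) = Res X \<tau> \<xi> x \<oplus>\<^bsub>Mod X \<xi>\<^esub> Res X \<tau> \<xi> y"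
    and "\<And>a x. a \<in> carrier (A \<tau>) \<Longrightarrow> x \<in> carrier (Mod X \<tau>) \<Longrightarrow>
           Res X \<tau> \<xi> (a \<odot>\<^bsub>Mod X \<tau>\<^esub> x) = rs \<xi> a \<odot>\<^bsub>Mod X \<xi>\<^esub> Res X \<tau> \<xi> x"
    and "\<And>d. Res X \<tau> \<xi> ` Deg X \<tau> d \<subseteq> Deg X \<xi> d"
  using assms unfolding A_module_def by blast+

lemma A_module_Res_abelian_group_hom:
  assumes "A_module \<Sigma> X" "\<tau> \<in> \<Sigma>" "\<xi> \<in> \<Sigma>" "cface \<xi> \<tau>"
  shows "abelian_group_hom (Mod X \<tau>) (Mod X \<xi>) (Res X \<tau> \<xi>)"
  using assms A_module_Res(1,2)[OF assms(1,2,4)]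
  by (intro abelian_group_homI' graded_module_abelian_group[OF A_module_graded]) auto

lemma A_module_Res_self: "A_module \<Sigma> X \<Longrightarrow> \<tau> \<in> \<Sigma> \<Longrightarrow> x \<in> carrier (Mod X \<tau>) \<Longrightarrow> Res X \<tau> \<tau> x = x"
  unfolding A_module_def by blast

lemma A_module_Res_trans:
  "A_module \<Sigma> X \<Longrightarrow> \<tau> \<in> \<Sigma> \<Longrightarrow> cface \<xi> \<tau> \<Longrightarrow> cface \<zeta> \<xi> \<Longrightarrow> x \<in> carrier (Mod X \<tau>) \<Longrightarrow>
    Res X \<xi> \<zeta> (Res X \<tau> \<xi> x) = Res X \<tau> \<zeta> x"
  unfolding A_module_def by blast

lemma A_hom_graded_hom:
  "A_hom \<Sigma> X Y f \<Longrightarrow> \<tau> \<in> \<Sigma> \<Longrightarrow> graded_hom (A \<tau>) (Mod X \<tau>) (Deg X \<tau>) (Mod Y \<tau>) (Deg Y \<tau>) (f \<tau>)"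
  unfolding A_hom_def by blast

lemma A_hom_Res:
  "A_hom \<Sigma> X Y f \<Longrightarrow> \<tau> \<in> \<Sigma> \<Longrightarrow> cface \<xi> \<tau> \<Longrightarrow> x \<in> carrier (Mod X \<tau>) \<Longrightarrow>
    f \<xi> (Res X \<tau> \<xi> x) = Res Y \<tau> \<xi> (f \<tau> x)"
  unfolding A_hom_def by blast

lemma A_hom_mono: "A_hom T X Y f \<Longrightarrow> S \<subseteq> T \<Longrightarrow> A_hom S X Y f"
  unfolding A_hom_def by blast

section \<open>Extending across a cone\<close>

definition proper_faces :: "'a::euclidean_space set \<Rightarrow> 'a set set" where
  "proper_faces \<sigma> = {\<xi>. cface \<xi> \<sigma> \<and> \<xi> \<noteq> \<sigma>}"

lemma proper_faces_in_fan:
  assumes "finite_fan \<Sigma>" "\<sigma> \<in> \<Sigma>" "\<xi> \<in> proper_faces \<sigma>"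
  shows "\<xi> \<in> \<Sigma>" and "cface \<xi> \<sigma>" and "\<xi> \<subseteq> \<sigma>"
  using assms face_of_imp_subset unfolding finite_fan_def proper_faces_def cface_def by blast+

lemma boundary_section_of_restrictions:
  assumes N: "A_module \<Sigma> N" and \<sigma>: "\<sigma> \<in> \<Sigma>" and \<psi>: "A_hom (proper_faces \<sigma>) N I \<psi>"
    and n: "n \<in> carrier (Mod N \<sigma>)"
  shows "(\<lambda>\<xi>. \<psi> \<xi> (Res N \<sigma> \<xi> n)) \<in> boundary_sections I \<sigma>"
  unfolding boundary_sections_def
proof (intro CollectI conjI allI impI)
  fix \<xi> assume "cface \<xi> \<sigma> \<and> \<xi> \<noteq> \<sigma>"
  then show "\<psi> \<xi> (Res N \<sigma> \<xi> n) \<in> carrier (Mod I \<xi>)"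
    using A_hom_graded_hom[OF \<psi>] A_module_Res(1)[OF N \<sigma>] n
    by (fastforce simp: proper_faces_def graded_hom_def)
next
  fix \<xi> \<zeta> assume \<xi>: "cface \<xi> \<sigma> \<and> \<xi> \<noteq> \<sigma>" and \<zeta>: "cface \<zeta> \<xi>"
  have "Res I \<xi> \<zeta> (\<psi> \<xi> (Res N \<sigma> \<xi> n)) = \<psi> \<zeta> (Res N \<xi> \<zeta> (Res N \<sigma> \<xi> n))"
    using A_hom_Res[OF \<psi> _ \<zeta>] A_module_Res(1)[OF N \<sigma>] \<xi> n by (fastforce simp: proper_faces_def)
  also have "\<dots> = \<psi> \<zeta> (Res N \<sigma> \<zeta> n)"
    using A_module_Res_trans[OF N \<sigma> _ \<zeta> n] \<xi> by simp
  finally show "Res I \<xi> \<zeta> (\<psi> \<xi> (Res N \<sigma> \<xi> n)) = \<psi> \<zeta> (Res N \<sigma> \<zeta> n)" .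
qed

definition extends_boundary ::
    "('a::euclidean_space, 'n) amod \<Rightarrow> ('a, 'i) amod \<Rightarrow> ('a set \<Rightarrow> 'n \<Rightarrow> 'i) \<Rightarrow> 'a set \<Rightarrow> 'i \<Rightarrow> 'n \<Rightarrow> bool"
  where "extends_boundary N I \<psi> \<sigma> x n \<longleftrightarrow> x \<in> carrier (Mod I \<sigma>) \<and> n \<in> carrier (Mod N \<sigma>) \<and>
    (\<forall>\<xi>\<in>proper_faces \<sigma>. Res I \<sigma> \<xi> x = \<psi> \<xi> (Res N \<sigma> \<xi> n))"

lemma flabby_extends_boundary:
  assumes N: "A_module \<Sigma> N" and flabby: "flabby \<Sigma> I" and \<sigma>: "\<sigma> \<in> \<Sigma>"
    and \<psi>: "A_hom (proper_faces \<sigma>) N I \<psi>" and n: "n \<in> carrier (Mod N \<sigma>)"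
  shows "\<exists>x. extends_boundary N I \<psi> \<sigma> x n"
  using bspec[OF flabby[unfolded flabby_def] \<sigma>] boundary_section_of_restrictions[OF N \<sigma> \<psi> n] n
  by (fastforce simp: extends_boundary_def proper_faces_def)

lemma extends_boundary_linear:
  assumes fan: "finite_fan \<Sigma>" and N: "A_module \<Sigma> N" and I: "A_module \<Sigma> I" and \<sigma>: "\<sigma> \<in> \<Sigma>"
    and \<psi>: "A_hom (proper_faces \<sigma>) N I \<psi>"
  shows "extends_boundary N I \<psi> \<sigma> \<zero>\<^bsub>Mod I \<sigma>\<^esub> \<zero>\<^bsub>Mod N \<sigma>\<^esub>"
    and "extends_boundary N I \<psi> \<sigma> x n \<Longrightarrow> extends_boundary N I \<psi> \<sigma> y m \<Longrightarrow>
      extends_boundary N I \<psi> \<sigma> (x \<oplus>\<^bsub>Mod I \<sigma>\<^esub> y) (n \<oplus>\<^bsub>Mod N \<sigma>\<^esub> m)"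
    and "a \<in> carrier (A \<sigma>) \<Longrightarrow> extends_boundary N I \<psi> \<sigma> x n \<Longrightarrow>
      extends_boundary N I \<psi> \<sigma> (a \<odot>\<^bsub>Mod I \<sigma>\<^esub> x) (a \<odot>\<^bsub>Mod N \<sigma>\<^esub> n)"
proof -
  note faces = proper_faces_in_fan[OF fan \<sigma>]
  interpret N\<sigma>: module "A \<sigma>" "Mod N \<sigma>" using graded_module_module[OF A_module_graded[OF N \<sigma>]] .
  interpret I\<sigma>: module "A \<sigma>" "Mod I \<sigma>" using graded_module_module[OF A_module_graded[OF I \<sigma>]] .
  have Res_N: "abelian_group_hom (Mod N \<sigma>) (Mod N \<xi>) (Res N \<sigma> \<xi>)"
    and Res_I: "abelian_group_hom (Mod I \<sigma>) (Mod I \<xi>) (Res I \<sigma> \<xi>)"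
    and \<psi>\<xi>: "abelian_group_hom (Mod N \<xi>) (Mod I \<xi>) (\<psi> \<xi>)" if "\<xi> \<in> proper_faces \<sigma>" for \<xi>
    using A_module_Res_abelian_group_hom[OF N \<sigma>] A_module_Res_abelian_group_hom[OF I \<sigma>]
      graded_hom_abelian_group_hom[OF A_module_graded[OF N] A_module_graded[OF I] A_hom_graded_hom[OF \<psi>]]
      faces[OF that] that by auto
  show "extends_boundary N I \<psi> \<sigma> \<zero>\<^bsub>Mod I \<sigma>\<^esub> \<zero>\<^bsub>Mod N \<sigma>\<^esub>"
    using abelian_group_hom.hom_zero[OF Res_N] abelian_group_hom.hom_zero[OF Res_I]
      abelian_group_hom.hom_zero[OF \<psi>\<xi>] by (simp add: extends_boundary_def)
  show "extends_boundary N I \<psi> \<sigma> (x \<oplus>\<^bsub>Mod I \<sigma>\<^esub> y) (n \<oplus>\<^bsub>Mod N \<sigma>\<^esub> m)"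
    if xn: "extends_boundary N I \<psi> \<sigma> x n" and ym: "extends_boundary N I \<psi> \<sigma> y m"
  proof -
    have "Res I \<sigma> \<xi> (x \<oplus>\<^bsub>Mod I \<sigma>\<^esub> y) = \<psi> \<xi> (Res N \<sigma> \<xi> (n \<oplus>\<^bsub>Mod N \<sigma>\<^esub> m))"
      if \<xi>: "\<xi> \<in> proper_faces \<sigma>" for \<xi>
    proof -
      interpret Res_N: abelian_group_hom "Mod N \<sigma>" "Mod N \<xi>" "Res N \<sigma> \<xi>" using Res_N[OF \<xi>] .
      interpret Res_I: abelian_group_hom "Mod I \<sigma>" "Mod I \<xi>" "Res I \<sigma> \<xi>" using Res_I[OF \<xi>] .
      interpret \<psi>\<xi>: abelian_group_hom "Mod N \<xi>" "Mod I \<xi>" "\<psi> \<xi>" using \<psi>\<xi>[OF \<xi>] .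
      show ?thesis using xn ym \<xi> by (simp add: extends_boundary_def)
    qed
    then show ?thesis using xn ym by (simp add: extends_boundary_def)
  qed
  show "extends_boundary N I \<psi> \<sigma> (a \<odot>\<^bsub>Mod I \<sigma>\<^esub> x) (a \<odot>\<^bsub>Mod N \<sigma>\<^esub> n)"
    if a: "a \<in> carrier (A \<sigma>)" and xn: "extends_boundary N I \<psi> \<sigma> x n"
  proof -
    have "Res I \<sigma> \<xi> (a \<odot>\<^bsub>Mod I \<sigma>\<^esub> x) = \<psi> \<xi> (Res N \<sigma> \<xi> (a \<odot>\<^bsub>Mod N \<sigma>\<^esub> n))"
      if \<xi>: "\<xi> \<in> proper_faces \<sigma>" for \<xi>
    proof -
      have "rs \<xi> a \<in> carrier (A \<xi>)" using rs_carrier[OF a faces(3)[OF \<xi>]] .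
      moreover have "Res N \<sigma> \<xi> n \<in> carrier (Mod N \<xi>)"
        using xn Res_N[OF \<xi>] by (simp add: extends_boundary_def abelian_group_hom.hom_closed)
      ultimately show ?thesis
        using xn \<xi> a A_hom_graded_hom[OF \<psi> \<xi>]
        by (simp add: extends_boundary_def A_module_Res(3)[OF I \<sigma> faces(2)[OF \<xi>]]
            A_module_Res(3)[OF N \<sigma> faces(2)[OF \<xi>]] graded_hom_def)
    qed
    then show ?thesis using a xn by (simp add: extends_boundary_def)
  qed
qed

lemma linear_extension_from_boundary:
  assumes fan: "finite_fan \<Sigma>" and N: "A_module \<Sigma> N" and I: "A_module \<Sigma> I"
    and flabby: "flabby \<Sigma> I" and free: "free_module (A \<sigma>) (Mod N \<sigma>)" and \<sigma>: "\<sigma> \<in> \<Sigma>"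
    and \<psi>: "A_hom (proper_faces \<sigma>) N I \<psi>"
  shows "\<exists>h. abelian_group_hom (Mod N \<sigma>) (Mod I \<sigma>) h \<and>
    (\<forall>a\<in>carrier (A \<sigma>). \<forall>x\<in>carrier (Mod N \<sigma>). h (a \<odot>\<^bsub>Mod N \<sigma>\<^esub> x) = a \<odot>\<^bsub>Mod I \<sigma>\<^esub> h x) \<and>
    (\<forall>\<xi>\<in>proper_faces \<sigma>. \<forall>n\<in>carrier (Mod N \<sigma>). Res I \<sigma> \<xi> (h n) = \<psi> \<xi> (Res N \<sigma> \<xi> n))"
proof -
  let ?K = "{(x, n). extends_boundary N I \<psi> \<sigma> x n}"
  have "\<exists>x\<in>carrier (Mod I \<sigma>). (x, n) \<in> ?K" if "n \<in> carrier (Mod N \<sigma>)" for n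
    using flabby_extends_boundary[OF N flabby \<sigma> \<psi> that] by (auto simp: extends_boundary_def)
  then obtain h where "abelian_group_hom (Mod N \<sigma>) (Mod I \<sigma>) h"
    "\<forall>a\<in>carrier (A \<sigma>). \<forall>x\<in>carrier (Mod N \<sigma>). h (a \<odot>\<^bsub>Mod N \<sigma>\<^esub> x) = a \<odot>\<^bsub>Mod I \<sigma>\<^esub> h x"
    "\<forall>n\<in>carrier (Mod N \<sigma>). (h n, n) \<in> ?K"
    using free_module_lift[OF graded_module_module[OF A_module_graded[OF N \<sigma>]]
        graded_module_module[OF A_module_graded[OF I \<sigma>]] free, of ?K]
      extends_boundary_linear[OF fan N I \<sigma> \<psi>]
    by auto
  then show ?thesis by (auto simp: extends_boundary_def)
qed

lemma graded_extension_from_boundary: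
  assumes fan: "finite_fan \<Sigma>" and N: "A_module \<Sigma> N" and I: "A_module \<Sigma> I"
    and flabby: "flabby \<Sigma> I" and free: "free_module (A \<sigma>) (Mod N \<sigma>)" and \<sigma>: "\<sigma> \<in> \<Sigma>"
    and \<psi>: "A_hom (proper_faces \<sigma>) N I \<psi>"
  shows "\<exists>c. graded_hom (A \<sigma>) (Mod N \<sigma>) (Deg N \<sigma>) (Mod I \<sigma>) (Deg I \<sigma>) c \<and>
    (\<forall>\<xi>\<in>proper_faces \<sigma>. \<forall>n\<in>carrier (Mod N \<sigma>). Res I \<sigma> \<xi> (c n) = \<psi> \<xi> (Res N \<sigma> \<xi> n))"
proof -
  note faces = proper_faces_in_fan[OF fan \<sigma>]
  note N\<sigma> = A_module_graded[OF N \<sigma>] and I\<sigma> = A_module_graded[OF I \<sigma>]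
  obtain h where h: "abelian_group_hom (Mod N \<sigma>) (Mod I \<sigma>) h"
    and h_smult: "\<And>a x. a \<in> carrier (A \<sigma>) \<Longrightarrow> x \<in> carrier (Mod N \<sigma>) \<Longrightarrow>
      h (a \<odot>\<^bsub>Mod N \<sigma>\<^esub> x) = a \<odot>\<^bsub>Mod I \<sigma>\<^esub> h x"
    and h_Res: "\<And>\<xi> n. \<xi> \<in> proper_faces \<sigma> \<Longrightarrow> n \<in> carrier (Mod N \<sigma>) \<Longrightarrow>
      Res I \<sigma> \<xi> (h n) = \<psi> \<xi> (Res N \<sigma> \<xi> n)"
    using linear_extension_from_boundary[OF assms] by blast
  let ?c = "degree0_part (Mod N \<sigma>) (Deg N \<sigma>) (Mod I \<sigma>) (Deg I \<sigma>) h"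
  have "graded_hom (A \<sigma>) (Mod N \<sigma>) (Deg N \<sigma>) (Mod I \<sigma>) (Deg I \<sigma>) ?c"
    using graded_hom_degree0_part[OF N\<sigma> I\<sigma> Ahom_carrier h h_smult A_carrier_homogeneous_sums] .
  moreover have "Res I \<sigma> \<xi> (?c n) = \<psi> \<xi> (Res N \<sigma> \<xi> n)"
    if \<xi>: "\<xi> \<in> proper_faces \<sigma>" and n: "n \<in> carrier (Mod N \<sigma>)" for \<xi> n
  proof (rule degree0_part_equation[OF N\<sigma> I\<sigma> Ahom_carrier h h_smult,
        where J = "Mod I \<xi>" and Jh = "Deg I \<xi>" and Q = "Res I \<sigma> \<xi>"
        and \<beta> = "\<lambda>n. \<psi> \<xi> (Res N \<sigma> \<xi> n)"])
    note N\<xi> = A_module_graded[OF N faces(1)[OF \<xi>]] and I\<xi> = A_module_graded[OF I faces(1)[OF \<xi>]]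
    have \<psi>\<xi>: "graded_hom (A \<xi>) (Mod N \<xi>) (Deg N \<xi>) (Mod I \<xi>) (Deg I \<xi>) (\<psi> \<xi>)"
      using A_hom_graded_hom[OF \<psi> \<xi>] .
    show "graded_module (A \<xi>) (Ahom \<xi>) (Mod I \<xi>) (Deg I \<xi>)" by (fact I\<xi>)
    show "abelian_group_hom (Mod I \<sigma>) (Mod I \<xi>) (Res I \<sigma> \<xi>)"
      using A_module_Res_abelian_group_hom[OF I \<sigma> faces(1,2)[OF \<xi>]] .
    show "Res I \<sigma> \<xi> ` Deg I \<sigma> d \<subseteq> Deg I \<xi> d" for d
      using A_module_Res(4)[OF I \<sigma> faces(2)[OF \<xi>]] .
    show "abelian_group_hom (Mod N \<sigma>) (Mod I \<xi>) (\<lambda>n. \<psi> \<xi> (Res N \<sigma> \<xi> n))"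
      using abelian_group_hom_comp[OF A_module_Res_abelian_group_hom[OF N \<sigma> faces(1,2)[OF \<xi>]]
          graded_hom_abelian_group_hom[OF N\<xi> I\<xi> \<psi>\<xi>]] .
    show "(\<lambda>n. \<psi> \<xi> (Res N \<sigma> \<xi> n)) ` Deg N \<sigma> d \<subseteq> Deg I \<xi> d" for d
      using A_module_Res(4)[OF N \<sigma> faces(2)[OF \<xi>], of d] \<psi>\<xi> by (fastforce simp: graded_hom_def)
  qed (use h_Res[OF \<xi>] n in auto)
  ultimately show ?thesis by blast
qed

lemma Res_split_extension:
  assumes fan: "finite_fan \<Sigma>" and M: "A_module \<Sigma> M" and N: "A_module \<Sigma> N" and I: "A_module \<Sigma> I"
    and \<eta>: "A_hom \<Sigma> M N \<eta>" and \<phi>: "A_hom \<Sigma> M I \<phi>" and \<sigma>: "\<sigma> \<in> \<Sigma>" and \<xi>: "\<xi> \<in> proper_faces \<sigma>"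
    and \<psi>: "abelian_group_hom (Mod N \<xi>) (Mod I \<xi>) \<psi>"
    and \<psi>_\<eta>: "\<And>x. x \<in> carrier (Mod M \<xi>) \<Longrightarrow> \<psi> (\<eta> \<xi> x) = \<phi> \<xi> x"
    and c: "abelian_group_hom (Mod N \<sigma>) (Mod I \<sigma>) c"
    and c_Res: "\<And>n. n \<in> carrier (Mod N \<sigma>) \<Longrightarrow> Res I \<sigma> \<xi> (c n) = \<psi> (Res N \<sigma> \<xi> n)"
    and m: "m \<in> carrier (Mod M \<sigma>)" and n: "n \<in> carrier (Mod N \<sigma>)"
  shows "Res I \<sigma> \<xi> (\<phi> \<sigma> m \<oplus>\<^bsub>Mod I \<sigma>\<^esub> c (n \<ominus>\<^bsub>Mod N \<sigma>\<^esub> \<eta> \<sigma> m)) = \<psi> (Res N \<sigma> \<xi> n)"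
proof -
  note faces = proper_faces_in_fan[OF fan \<sigma> \<xi>]
  note M\<sigma> = A_module_graded[OF M \<sigma>] and N\<sigma> = A_module_graded[OF N \<sigma>] and I\<sigma> = A_module_graded[OF I \<sigma>]
  note M\<xi> = A_module_graded[OF M faces(1)] and I\<xi> = A_module_graded[OF I faces(1)]
  interpret I\<xi>: abelian_group "Mod I \<xi>" using graded_module_abelian_group[OF I\<xi>] .
  interpret \<eta>\<sigma>: abelian_group_hom "Mod M \<sigma>" "Mod N \<sigma>" "\<eta> \<sigma>"
    using graded_hom_abelian_group_hom[OF M\<sigma> N\<sigma> A_hom_graded_hom[OF \<eta> \<sigma>]] .
  interpret \<phi>\<sigma>: abelian_group_hom "Mod M \<sigma>" "Mod I \<sigma>" "\<phi> \<sigma>"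
    using graded_hom_abelian_group_hom[OF M\<sigma> I\<sigma> A_hom_graded_hom[OF \<phi> \<sigma>]] .
  interpret \<phi>\<xi>: abelian_group_hom "Mod M \<xi>" "Mod I \<xi>" "\<phi> \<xi>"
    using graded_hom_abelian_group_hom[OF M\<xi> I\<xi> A_hom_graded_hom[OF \<phi> faces(1)]] .
  interpret c: abelian_group_hom "Mod N \<sigma>" "Mod I \<sigma>" c by (fact c)
  interpret \<psi>: abelian_group_hom "Mod N \<xi>" "Mod I \<xi>" \<psi> by (fact \<psi>)
  interpret Res_M: abelian_group_hom "Mod M \<sigma>" "Mod M \<xi>" "Res M \<sigma> \<xi>"
    using A_module_Res_abelian_group_hom[OF M \<sigma> faces(1,2)] .
  interpret Res_N: abelian_group_hom "Mod N \<sigma>" "Mod N \<xi>" "Res N \<sigma> \<xi>"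
    using A_module_Res_abelian_group_hom[OF N \<sigma> faces(1,2)] .
  interpret Res_I: abelian_group_hom "Mod I \<sigma>" "Mod I \<xi>" "Res I \<sigma> \<xi>"
    using A_module_Res_abelian_group_hom[OF I \<sigma> faces(1,2)] .
  let ?m = "Res M \<sigma> \<xi> m"
  have "Res I \<sigma> \<xi> (\<phi> \<sigma> m \<oplus>\<^bsub>Mod I \<sigma>\<^esub> c (n \<ominus>\<^bsub>Mod N \<sigma>\<^esub> \<eta> \<sigma> m)) =
      \<phi> \<xi> ?m \<oplus>\<^bsub>Mod I \<xi>\<^esub> \<psi> (Res N \<sigma> \<xi> (n \<ominus>\<^bsub>Mod N \<sigma>\<^esub> \<eta> \<sigma> m))"
    using m n by (simp add: c_Res A_hom_Res[OF \<phi> \<sigma> faces(2)])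
  also have "\<dots> = \<phi> \<xi> ?m \<oplus>\<^bsub>Mod I \<xi>\<^esub> (\<psi> (Res N \<sigma> \<xi> n) \<ominus>\<^bsub>Mod I \<xi>\<^esub> \<psi> (\<eta> \<xi> ?m))"
    using m n by (simp add: Res_N.hom_a_minus \<psi>.hom_a_minus A_hom_Res[OF \<eta> \<sigma> faces(2)])
  also have "\<dots> = \<psi> (Res N \<sigma> \<xi> n)"
    using m n by (simp add: \<psi>_\<eta> I\<xi>.minus_eq I\<xi>.a_comm[of "\<psi> _"] I\<xi>.r_neg2)
  finally show ?thesis .
qed

lemma extension_step:
  assumes fan: "finite_fan \<Sigma>"
    and M: "A_module \<Sigma> M" and N: "A_module \<Sigma> N" and I: "A_module \<Sigma> I"
    and flabby: "flabby \<Sigma> I" and \<eta>: "strongly_injective \<Sigma> M N \<eta>" and free: "locally_free \<Sigma> N"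
    and \<phi>: "A_hom \<Sigma> M I \<phi>" and \<sigma>: "\<sigma> \<in> \<Sigma>"
    and \<psi>: "A_hom (proper_faces \<sigma>) N I \<psi>"
    and \<psi>_\<eta>: "\<forall>\<xi>\<in>proper_faces \<sigma>. \<forall>x\<in>carrier (Mod M \<xi>). \<psi> \<xi> (\<eta> \<xi> x) = \<phi> \<xi> x"
  shows "\<exists>f. graded_hom (A \<sigma>) (Mod N \<sigma>) (Deg N \<sigma>) (Mod I \<sigma>) (Deg I \<sigma>) f \<and>
    (\<forall>\<xi>\<in>proper_faces \<sigma>. \<forall>n\<in>carrier (Mod N \<sigma>). Res I \<sigma> \<xi> (f n) = \<psi> \<xi> (Res N \<sigma> \<xi> n)) \<and>
    (\<forall>x\<in>carrier (Mod M \<sigma>). f (\<eta> \<sigma> x) = \<phi> \<sigma> x)"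
proof -
  note faces = proper_faces_in_fan[OF fan \<sigma>]
  note M\<sigma> = A_module_graded[OF M \<sigma>] and N\<sigma> = A_module_graded[OF N \<sigma>] and I\<sigma> = A_module_graded[OF I \<sigma>]
  have \<eta>_hom: "A_hom \<Sigma> M N \<eta>" using \<eta> by (simp add: strongly_injective_def)
  obtain r where r: "graded_hom (A \<sigma>) (Mod N \<sigma>) (Deg N \<sigma>) (Mod M \<sigma>) (Deg M \<sigma>) r"
    and r_\<eta>: "\<And>x. x \<in> carrier (Mod M \<sigma>) \<Longrightarrow> r (\<eta> \<sigma> x) = x"
    using \<eta> \<sigma> unfolding strongly_injective_def by blast
  obtain c where c: "graded_hom (A \<sigma>) (Mod N \<sigma>) (Deg N \<sigma>) (Mod I \<sigma>) (Deg I \<sigma>) c"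
    and c_Res: "\<And>\<xi> n. \<xi> \<in> proper_faces \<sigma> \<Longrightarrow> n \<in> carrier (Mod N \<sigma>) \<Longrightarrow>
      Res I \<sigma> \<xi> (c n) = \<psi> \<xi> (Res N \<sigma> \<xi> n)"
    using graded_extension_from_boundary[OF fan N I flabby _ \<sigma> \<psi>] free \<sigma>
    unfolding locally_free_def by blast
  define f where "f n = \<phi> \<sigma> (r n) \<oplus>\<^bsub>Mod I \<sigma>\<^esub> c (n \<ominus>\<^bsub>Mod N \<sigma>\<^esub> \<eta> \<sigma> (r n))" for n
  have "Res I \<sigma> \<xi> (f n) = \<psi> \<xi> (Res N \<sigma> \<xi> n)"
    if \<xi>: "\<xi> \<in> proper_faces \<sigma>" and n: "n \<in> carrier (Mod N \<sigma>)" for \<xi> n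
  proof -
    have "abelian_group_hom (Mod N \<xi>) (Mod I \<xi>) (\<psi> \<xi>)"
      using graded_hom_abelian_group_hom[OF A_module_graded[OF N faces(1)[OF \<xi>]]
          A_module_graded[OF I faces(1)[OF \<xi>]] A_hom_graded_hom[OF \<psi> \<xi>]] .
    moreover have "abelian_group_hom (Mod N \<sigma>) (Mod I \<sigma>) c"
      using graded_hom_abelian_group_hom[OF N\<sigma> I\<sigma> c] .
    moreover have "r n \<in> carrier (Mod M \<sigma>)" using r n by (auto simp: graded_hom_def)
    ultimately show ?thesis
      unfolding f_def using \<psi>_\<eta> \<xi> n c_Res[OF \<xi>]
        Res_split_extension[where \<psi> = "\<psi> \<xi>" and c = c, OF fan M N I \<eta>_hom \<phi> \<sigma> \<xi>]
      by blast
  qed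
  then show ?thesis
    using graded_hom_split_extension[OF N\<sigma> I\<sigma> A_hom_graded_hom[OF \<eta>_hom \<sigma>] r r_\<eta>
        A_hom_graded_hom[OF \<phi> \<sigma>] c, folded f_def]
    by blast
qed

section \<open>Induction over the fan\<close>

lemma A_hom_extend_to_cone:
  assumes N: "A_module \<Sigma> N" and I: "A_module \<Sigma> I" and \<sigma>: "\<sigma> \<in> \<Sigma>" and "\<sigma> \<notin> S"
    and closed: "\<forall>\<tau>\<in>S. \<forall>\<xi>. cface \<xi> \<tau> \<longrightarrow> \<xi> \<in> S"
    and \<psi>: "A_hom S N I \<psi>"
    and f: "graded_hom (A \<sigma>) (Mod N \<sigma>) (Deg N \<sigma>) (Mod I \<sigma>) (Deg I \<sigma>) f"
    and f_Res: "\<forall>\<xi>\<in>proper_faces \<sigma>. \<forall>n\<in>carrier (Mod N \<sigma>). Res I \<sigma> \<xi> (f n) = \<psi> \<xi> (Res N \<sigma> \<xi> n)"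
  shows "A_hom (insert \<sigma> S) N I (\<psi>(\<sigma> := f))"
  unfolding A_hom_def
proof (intro conjI ballI allI impI)
  fix \<tau> assume "\<tau> \<in> insert \<sigma> S"
  then show "graded_hom (A \<tau>) (Mod N \<tau>) (Deg N \<tau>) (Mod I \<tau>) (Deg I \<tau>) ((\<psi>(\<sigma> := f)) \<tau>)"
    using f A_hom_graded_hom[OF \<psi>] \<open>\<sigma> \<notin> S\<close> by auto
next
  fix \<tau> \<xi> x assume \<tau>: "\<tau> \<in> insert \<sigma> S" and \<xi>: "cface \<xi> \<tau>" and x: "x \<in> carrier (Mod N \<tau>)"
  show "(\<psi>(\<sigma> := f)) \<xi> (Res N \<tau> \<xi> x) = Res I \<tau> \<xi> ((\<psi>(\<sigma> := f)) \<tau> x)"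
  proof (cases "\<tau> = \<sigma>")
    case True
    have "f x \<in> carrier (Mod I \<sigma>)" using f x True by (auto simp: graded_hom_def)
    then show ?thesis
      using True \<xi> x f_Res A_module_Res_self[OF N \<sigma>] A_module_Res_self[OF I \<sigma>]
      by (cases "\<xi> = \<sigma>") (auto simp: proper_faces_def)
  next
    case False
    then have "\<tau> \<in> S" "\<xi> \<in> S" using \<tau> \<xi> closed by auto
    then show ?thesis using False \<xi> x A_hom_Res[OF \<psi>] \<open>\<sigma> \<notin> S\<close> by auto
  qed
qed

lemma extension_on_face_closed:
  assumes fan: "finite_fan \<Sigma>"
    and M: "A_module \<Sigma> M" and N: "A_module \<Sigma> N" and I: "A_module \<Sigma> I"
    and flabby: "flabby \<Sigma> I" and \<eta>: "strongly_injective \<Sigma> M N \<eta>" and free: "locally_free \<Sigma> N"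
    and \<phi>: "A_hom \<Sigma> M I \<phi>"
    and "S \<subseteq> \<Sigma>" and "\<forall>\<tau>\<in>S. \<forall>\<xi>. cface \<xi> \<tau> \<longrightarrow> \<xi> \<in> S"
  shows "\<exists>\<psi>. A_hom S N I \<psi> \<and> (\<forall>\<tau>\<in>S. \<forall>x\<in>carrier (Mod M \<tau>). \<psi> \<tau> (\<eta> \<tau> x) = \<phi> \<tau> x)"
proof -
  have "finite S" using \<open>S \<subseteq> \<Sigma>\<close> fan finite_subset by (auto simp: finite_fan_def)
  then show ?thesis using assms(9,10)
  proof (induction S rule: finite_psubset_induct)
    case (psubset S)
    show ?case
    proof (cases "S = {}")
      case True
      then show ?thesis by (simp add: A_hom_def)
    next
      case False
      obtain \<sigma> where "\<sigma> \<in> S" and maximal: "\<And>\<tau>. \<tau> \<in> S \<Longrightarrow> \<sigma> \<subseteq> \<tau> \<Longrightarrow> \<sigma> = \<tau>"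
        using finite_has_maximal[OF psubset.hyps False] by blast
      have \<sigma>: "\<sigma> \<in> \<Sigma>" using \<open>\<sigma> \<in> S\<close> psubset.prems(1) by blast
      have faces_below: "\<xi> \<in> S - {\<sigma>}" if "\<tau> \<in> S" "cface \<xi> \<tau>" "\<xi> \<noteq> \<tau>" for \<tau> \<xi>
        using that psubset.prems(2) maximal face_of_imp_subset by (fastforce simp: cface_def)
      have closed: "\<forall>\<tau>\<in>S - {\<sigma>}. \<forall>\<xi>. cface \<xi> \<tau> \<longrightarrow> \<xi> \<in> S - {\<sigma>}"
        using faces_below by blast
      then obtain \<psi> where \<psi>: "A_hom (S - {\<sigma>}) N I \<psi>"
        and \<psi>_\<eta>: "\<forall>\<tau>\<in>S - {\<sigma>}. \<forall>x\<in>carrier (Mod M \<tau>). \<psi> \<tau> (\<eta> \<tau> x) = \<phi> \<tau> x"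
        using psubset.IH[of "S - {\<sigma>}"] psubset.prems(1) \<open>\<sigma> \<in> S\<close> by blast
      have "proper_faces \<sigma> \<subseteq> S - {\<sigma>}"
        using faces_below[OF \<open>\<sigma> \<in> S\<close>] by (auto simp: proper_faces_def)
      then obtain f where f: "graded_hom (A \<sigma>) (Mod N \<sigma>) (Deg N \<sigma>) (Mod I \<sigma>) (Deg I \<sigma>) f"
        and f_Res: "\<forall>\<xi>\<in>proper_faces \<sigma>. \<forall>n\<in>carrier (Mod N \<sigma>). Res I \<sigma> \<xi> (f n) = \<psi> \<xi> (Res N \<sigma> \<xi> n)"
        and f_\<eta>: "\<forall>x\<in>carrier (Mod M \<sigma>). f (\<eta> \<sigma> x) = \<phi> \<sigma> x"
        using extension_step[OF fan M N I flabby \<eta> free \<phi> \<sigma> A_hom_mono[OF \<psi>]] \<psi>_\<eta> by blast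
      have "A_hom S N I (\<psi>(\<sigma> := f))"
        using A_hom_extend_to_cone[OF N I \<sigma> _ closed \<psi> f f_Res] \<open>\<sigma> \<in> S\<close>
        by (simp add: insert_absorb)
      moreover have "\<forall>\<tau>\<in>S. \<forall>x\<in>carrier (Mod M \<tau>). (\<psi>(\<sigma> := f)) \<tau> (\<eta> \<tau> x) = \<phi> \<tau> x"
        using \<psi>_\<eta> f_\<eta> by auto
      ultimately show ?thesis by blast
    qed
  qed
qed

theorem proposition6p5:
  fixes \<Sigma> :: "'a::euclidean_space set set"
    and \<M> :: "('a, 'm) amod" and \<N> :: "('a, 'n) amod" and \<I> :: "('a, 'i) amod"
    and \<eta> :: "'a set \<Rightarrow> 'm \<Rightarrow> 'n"
  assumes "finite_fan \<Sigma>"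
    and "A_module \<Sigma> \<M>" and "A_module \<Sigma> \<N>" and "A_module \<Sigma> \<I>"
    and "flabby \<Sigma> \<I>"
    and "strongly_injective \<Sigma> \<M> \<N> \<eta>"
    and "locally_free \<Sigma> \<N>"
  shows "\<forall>\<phi>. A_hom \<Sigma> \<M> \<I> \<phi> \<longrightarrow>
           (\<exists>\<psi>. A_hom \<Sigma> \<N> \<I> \<psi> \<and>
                 (\<forall>\<sigma>\<in>\<Sigma>. \<forall>x\<in>carrier (Mod \<M> \<sigma>). \<psi> \<sigma> (\<eta> \<sigma> x) = \<phi> \<sigma> x))"
proof (intro allI impI)
  fix \<phi> assume "A_hom \<Sigma> \<M> \<I> \<phi>"
  moreover have "\<forall>\<tau>\<in>\<Sigma>. \<forall>\<xi>. cface \<xi> \<tau> \<longrightarrow> \<xi> \<in> \<Sigma>"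
    using \<open>finite_fan \<Sigma>\<close> by (simp add: finite_fan_def)
  ultimately show "\<exists>\<psi>. A_hom \<Sigma> \<N> \<I> \<psi> \<and> (\<forall>\<sigma>\<in>\<Sigma>. \<forall>x\<in>carrier (Mod \<M> \<sigma>). \<psi> \<sigma> (\<eta> \<sigma> x) = \<phi> \<sigma> x)"
    using extension_on_face_closed[OF assms] by blast
qed

end
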